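(* (i) The symmetric bilinear form $(\cdot,\cdot)_i$ on $\bar{\mathcal V}_i$ is positive definite. (ii) The symmetric bilinear form $(\cdot,\cdot)_i$ on ${\mathcal V}_i$ is positive semidefinite.
   Context: Let ${\mathcal G}$ be a complex Lie algebra, ${\mathcal H}$ a subalgebra and $(\cdot,\cdot)$ a bilinear form on ${\mathcal G}$ such that: the form is symmetric, nondegenerate and invariant; ${\mathcal H}$ is a nontrivial finite dimensional abelian self-centralizing subalgebra with $\mathrm{ad}(h)$ diagonalizable for all $h\in{\mathcal H}$; for every root $\alpha$ with $(\alpha,\alpha)\neq 0$ and $x\in{\mathcal G}_\alpha$, $\mathrm{ad}(x)$ acts locally nilpotently on ${\mathcal G}$; the root system $R=\{\alpha\in{\mathcal H}^\star\mid {\mathcal G}_\alpha\neq 0\}$ is discrete in ${\mathcal H}^\star$; and $R^\times=\{\alpha\in R\mid(\alpha,\alpha)\neq0\}\neq\emptyset$ (i.e. ${\mathcal G}$ is a generalized reductive Lie algebra). Here the form is transferred to ${\mathcal H}^\star$ via $(\alpha,\beta):=(t_\alpha,t_\beta)$, where $t_\alpha\in{\mathcal H}$ represents $\alpha$ via the form. Let ${\mathcal V}$ be the real span of $R$. Partition $R^\times=\bigcup_i R^\times_i$ into the equivalence classes of the relation: $\alpha\sim\beta$ iff there is a chain $\alpha=\alpha_0,\alpha_1,\dots,\alpha_t=\beta$ in $R^\times$ with $(\alpha_j,\alpha_{j+1})\neq0$; so each $R^\times_i$ is indecomposable and $(R^\times_i,R^\times_j)=0$ for $i\neq j$. Let ${\mathcal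 V}_i$ be the real span of $R^\times_i$. Fix a nonzero scalar $c_i\in\mathbb C$ such that $(\cdot,\cdot)_i:=c_i(\cdot,\cdot)$ is real valued on ${\mathcal V}_i$ and $(\alpha,\alpha)_i>0$ for all $\alpha\in R^\times_i$. Let ${\mathcal V}^0=\{v\in{\mathcal V}\mid (v,{\mathcal V})=0\}$ be the radical of $(\cdot,\cdot)$ on ${\mathcal V}$, $\bar{\mathcal V}={\mathcal V}/{\mathcal V}^0$ with canonical map $v\mapsto\bar v$, equipped with the induced form $(\bar\alpha,\bar\beta):=(\alpha,\beta)$; let $\bar{\mathcal V}_i$ be the image of ${\mathcal V}_i$, with form $(\cdot,\cdot)_i=c_i(\cdot,\cdot)$. It has been shown that $\bar R_i=\{\bar\alpha\mid\alpha\in R^\times_i\}\cup\{0\}$ is finite. *)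

theory Defs
  imports Complex_Main
begin

text \<open>
  Elements of the dual space of H are
  represented as functions 'g to complex which are complex-linear on H and
  vanish outside H (so that equality of functionals is equality of functions).
\<close>

definition lie_algebra ::
  "(complex \<Rightarrow> 'g::ab_group_add \<Rightarrow> 'g) \<Rightarrow> ('g \<Rightarrow> 'g \<Rightarrow> 'g) \<Rightarrow> bool" where
  "lie_algebra smul br \<longleftrightarrow>
     vector_space smul \<and>
     (\<forall>a x y z. br (smul a x + y) z = smul a (br x z) + br y z) \<and>
     (\<forall>a x y z. br z (smul a x + y) = smul a (br z x) + br z y) \<and>
     (\<forall>x. br x x = 0) \<and>
     (\<forall>x y z. br x (br y z) + br y (br z x) + br z (br x y) = 0)"

definition good_form ::
  "(complex \<Rightarrow> 'g::ab_group_add \<Rightarrow> 'g) \<Rightarrow> ('g \<Rightarrow> 'g \<Rightarrow> 'g) \<Rightarrow> ('g \<Rightarrow> 'g \<Rightarrow> complex) \<Rightarrow> bool" where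
  "good_form smul br Bf \<longleftrightarrow>
     (\<forall>a x y z. Bf (smul a x + y) z = a * Bf x z + Bf y z) \<and>
     (\<forall>x y. Bf x y = Bf y x) \<and>
     (\<forall>x. (\<forall>y. Bf x y = 0) \<longrightarrow> x = 0) \<and>
     (\<forall>x y z. Bf (br x y) z = Bf x (br y z))"

definition ad_diagonalizable ::
  "(complex \<Rightarrow> 'g::ab_group_add \<Rightarrow> 'g) \<Rightarrow> ('g \<Rightarrow> 'g \<Rightarrow> 'g) \<Rightarrow> 'g \<Rightarrow> bool" where
  "ad_diagonalizable smul br h \<longleftrightarrow>
     module.span smul (\<Union>c. {x. br h x = smul c x}) = UNIV"

definition Hdual ::
  "(complex \<Rightarrow> 'g::ab_group_add \<Rightarrow> 'g) \<Rightarrow> 'g set \<Rightarrow> ('g \<Rightarrow> complex) set" where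
  "Hdual smul H = {\<alpha>. (\<forall>x. x \<notin> H \<longrightarrow> \<alpha> x = 0) \<and>
      (\<forall>a x y. x \<in> H \<longrightarrow> y \<in> H \<longrightarrow> \<alpha> (smul a x + y) = a * \<alpha> x + \<alpha> y)}"

definition rootspace ::
  "(complex \<Rightarrow> 'g::ab_group_add \<Rightarrow> 'g) \<Rightarrow> ('g \<Rightarrow> 'g \<Rightarrow> 'g) \<Rightarrow> 'g set \<Rightarrow> ('g \<Rightarrow> complex) \<Rightarrow> 'g set" where
  "rootspace smul br H \<alpha> = {x. \<forall>h\<in>H. br h x = smul (\<alpha> h) x}"

definition roots ::
  "(complex \<Rightarrow> 'g::ab_group_add \<Rightarrow> 'g) \<Rightarrow> ('g \<Rightarrow> 'g \<Rightarrow> 'g) \<Rightarrow> 'g set \<Rightarrow> ('g \<Rightarrow> complex) set" where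
  "roots smul br H = {\<alpha> \<in> Hdual smul H. rootspace smul br H \<alpha> \<noteq> {0}}"

definition tvec :: "('g \<Rightarrow> 'g \<Rightarrow> complex) \<Rightarrow> 'g set \<Rightarrow> ('g \<Rightarrow> complex) \<Rightarrow> 'g" where
  "tvec Bf H \<alpha> = (THE t. t \<in> H \<and> (\<forall>h\<in>H. Bf t h = \<alpha> h))"

definition dform ::
  "('g \<Rightarrow> 'g \<Rightarrow> complex) \<Rightarrow> 'g set \<Rightarrow> ('g \<Rightarrow> complex) \<Rightarrow> ('g \<Rightarrow> complex) \<Rightarrow> complex" where
  "dform Bf H \<alpha> \<beta> = Bf (tvec Bf H \<alpha>) (tvec Bf H \<beta>)"

definition roots_x ::
  "(complex \<Rightarrow> 'g::ab_group_add \<Rightarrow> 'g) \<Rightarrow> ('g \<Rightarrow> 'g \<Rightarrow> 'g) \<Rightarrow> ('g \<Rightarrow> 'g \<Rightarrow> complex) \<Rightarrow> 'g set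
     \<Rightarrow> ('g \<Rightarrow> complex) set" where
  "roots_x smul br Bf H = {\<alpha> \<in> roots smul br H. dform Bf H \<alpha> \<alpha> \<noteq> 0}"

text \<open>The topology
  on the finite dimensional space H^* is the topology of pointwise convergence on H
  (which coincides with the usual one).\<close>
definition discrete_in_Hdual :: "'g set \<Rightarrow> ('g \<Rightarrow> complex) set \<Rightarrow> bool" where
  "discrete_in_Hdual H S \<longleftrightarrow>
     (\<forall>\<alpha>\<in>S. \<exists>F e. finite F \<and> F \<subseteq> H \<and> e > 0 \<and>
        (\<forall>\<beta>\<in>S. (\<forall>h\<in>F. cmod (\<beta> h - \<alpha> h) < e) \<longrightarrow> \<beta> = \<alpha>))"

definition gen_reductive ::
  "(complex \<Rightarrow> 'g::ab_group_add \<Rightarrow> 'g) \<Rightarrow> ('g \<Rightarrow> 'g \<Rightarrow> 'g) \<Rightarrow> ('g \<Rightarrow> 'g \<Rightarrow> complex) \<Rightarrow> 'g set \<Rightarrow> bool" where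
  "gen_reductive smul br Bf H \<longleftrightarrow>
     lie_algebra smul br \<and>
     good_form smul br Bf \<and>
     module.subspace smul H \<and>
     (\<forall>x\<in>H. \<forall>y\<in>H. br x y \<in> H) \<and>
     (\<exists>B. finite B \<and> B \<subseteq> H \<and> module.span smul B = H) \<and>
     H \<noteq> {0} \<and>
     (\<forall>x\<in>H. \<forall>y\<in>H. br x y = 0) \<and>
     {x. \<forall>h\<in>H. br h x = 0} = H \<and>
     (\<forall>h\<in>H. ad_diagonalizable smul br h) \<and>
     (\<forall>\<alpha>\<in>roots_x smul br Bf H. \<forall>x\<in>rootspace smul br H \<alpha>. \<forall>y. \<exists>n. (br x ^^ n) y = 0) \<and>
     discrete_in_Hdual H (roots smul br H) \<and>
     roots_x smul br Bf H \<noteq> {}"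

definition rspan :: "('g \<Rightarrow> complex) set \<Rightarrow> ('g \<Rightarrow> complex) set" where
  "rspan S = {v. \<exists>F c. finite F \<and> F \<subseteq> S \<and>
                 v = (\<lambda>x. \<Sum>\<alpha>\<in>F. complex_of_real (c \<alpha>) * \<alpha> x)}"

definition radical ::
  "(complex \<Rightarrow> 'g::ab_group_add \<Rightarrow> 'g) \<Rightarrow> ('g \<Rightarrow> 'g \<Rightarrow> 'g) \<Rightarrow> ('g \<Rightarrow> 'g \<Rightarrow> complex) \<Rightarrow> 'g set
     \<Rightarrow> ('g \<Rightarrow> complex) set" where
  "radical smul br Bf H =
     {v \<in> rspan (roots smul br H). \<forall>w\<in>rspan (roots smul br H). dform Bf H v w = 0}"

definition component ::
  "(complex \<Rightarrow> 'g::ab_group_add \<Rightarrow> 'g) \<Rightarrow> ('g \<Rightarrow> 'g \<Rightarrow> 'g) \<Rightarrow> ('g \<Rightarrow> 'g \<Rightarrow> complex) \<Rightarrow> 'g set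
     \<Rightarrow> ('g \<Rightarrow> complex) \<Rightarrow> ('g \<Rightarrow> complex) set" where
  "component smul br Bf H \<alpha>0 =
     {\<beta>. (\<lambda>\<alpha> \<gamma>. \<alpha> \<in> roots_x smul br Bf H \<and> \<gamma> \<in> roots_x smul br Bf H \<and> dform Bf H \<alpha> \<gamma> \<noteq> 0)\<^sup>*\<^sup>* \<alpha>0 \<beta>}"

end

theory Submission
  imports Defs "HOL-Library.FuncSet" "HOL-Library.Function_Algebras"
begin

text \<open>
  For alpha in R_i^x the sl2-triple through alpha shows that every alpha-string of roots is
  unbroken and that n = 2(gamma, alpha)/(alpha, alpha) is an integer. A root pairing
  nontrivially with R_i^x lies in R_i^x or is isotropic, so it has norm at least 0; the norms
  of gamma - alpha and gamma - 2 alpha then bound |n| by 4.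
  As V_i is finite dimensional, the roots therefore induce only finitely many functionals
  (gamma, -) on V_i, and each reflection s_alpha permutes them. The sum P of their squares is
  a positive semidefinite form on V_i invariant under all s_alpha. Invariance forces
  P(alpha, -) = lambda_alpha (alpha, -)_i, and since R_i^x is indecomposable all lambda_alpha
  agree, so P = lambda (-, -)_i with lambda > 0. This gives (ii); and if (v, v)_i = 0 then
  P(v, v) = 0, so (gamma, v) = 0 for every root gamma, i.e. v lies in the radical V^0,
  which gives (i).
\<close>

section \<open>Positive forms on connected root strings\<close>

text \<open>R stands for the root system, S for the component R_i^x and B for the real form (-, -)_i.\<close>

locale root_component =
  fixes B :: "'a::real_vector \<Rightarrow> 'a \<Rightarrow> real" and R S :: "'a set" and \<alpha>0 :: 'a
  assumes S_subset_R: "S \<subseteq> R"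
    and B_add_left:
      "x \<in> span R \<Longrightarrow> y \<in> span R \<Longrightarrow> z \<in> span R \<Longrightarrow> B (x + y) z = B x z + B y z"
    and B_scaleR_left: "x \<in> span R \<Longrightarrow> z \<in> span R \<Longrightarrow> B (r *\<^sub>R x) z = r * B x z"
    and B_sym: "B x y = B y x"
    and B_pos: "\<alpha> \<in> S \<Longrightarrow> 0 < B \<alpha> \<alpha>"
    and uminus_S: "\<alpha> \<in> S \<Longrightarrow> - \<alpha> \<in> S"
    and S_closed: "\<alpha> \<in> S \<Longrightarrow> \<gamma> \<in> R \<Longrightarrow> B \<alpha> \<gamma> \<noteq> 0 \<Longrightarrow> B \<gamma> \<gamma> \<noteq> 0 \<Longrightarrow> \<gamma> \<in> S"
    and root_string: "\<alpha> \<in> S \<Longrightarrow> \<gamma> \<in> R \<Longrightarrow> \<exists>n::int. 2 * B \<gamma> \<alpha> = of_int n * B \<alpha> \<alpha> \<and>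
        (\<forall>k\<in>{min 0 n..max 0 n}. \<gamma> - of_int k *\<^sub>R \<alpha> \<in> R)"
    and finite_spanning_subset: "\<exists>A. finite A \<and> A \<subseteq> S \<and> S \<subseteq> span A"
    and \<alpha>0_in_S: "\<alpha>0 \<in> S"
    and S_connected: "\<beta> \<in> S \<Longrightarrow> (\<lambda>\<alpha> \<gamma>. \<alpha> \<in> S \<and> \<gamma> \<in> S \<and> B \<alpha> \<gamma> \<noteq> 0)\<^sup>*\<^sup>* \<alpha>0 \<beta>"
begin

lemma span_S_subset: "span S \<subseteq> span R"
  using S_subset_R by (rule span_mono)

lemma S_in_span_R: "\<alpha> \<in> S \<Longrightarrow> \<alpha> \<in> span R"
  using S_subset_R span_base by blast

lemma B_add_right: "x \<in> span R \<Longrightarrow> y \<in> span R \<Longrightarrow> z \<in> span R \<Longrightarrow> B z (x + y) = B z x + B z y"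
  by (metis B_sym B_add_left)

lemma B_scaleR_right: "x \<in> span R \<Longrightarrow> z \<in> span R \<Longrightarrow> B z (r *\<^sub>R x) = r * B z x"
  by (metis B_sym B_scaleR_left)

lemma B_diff_left: "x \<in> span R \<Longrightarrow> y \<in> span R \<Longrightarrow> z \<in> span R \<Longrightarrow> B (x - y) z = B x z - B y z"
  using B_add_left[of x "(-1) *\<^sub>R y" z] B_scaleR_left[of y z "-1"] by (simp add: span_neg)

lemma B_diff_right: "x \<in> span R \<Longrightarrow> y \<in> span R \<Longrightarrow> z \<in> span R \<Longrightarrow> B z (x - y) = B z x - B z y"
  by (metis B_sym B_diff_left)

lemma B_zero_left: "z \<in> span R \<Longrightarrow> B 0 z = 0"
  using B_scaleR_left[of 0 z 0] by (simp add: span_zero)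

lemma B_uminus_left: "x \<in> span R \<Longrightarrow> z \<in> span R \<Longrightarrow> B (- x) z = - B x z"
  using B_scaleR_left[of x z "-1"] by simp

lemma B_string_pairing:
  "\<alpha> \<in> span R \<Longrightarrow> \<gamma> \<in> span R \<Longrightarrow> B \<alpha> (\<gamma> - k *\<^sub>R \<alpha>) = B \<alpha> \<gamma> - k * B \<alpha> \<alpha>"
  by (simp add: B_diff_right B_scaleR_right span_scale)

lemma B_string_norm:
  assumes "\<alpha> \<in> span R" "\<gamma> \<in> span R"
  shows "B (\<gamma> - k *\<^sub>R \<alpha>) (\<gamma> - k *\<^sub>R \<alpha>) = B \<gamma> \<gamma> - 2 * k * B \<gamma> \<alpha> + k\<^sup>2 * B \<alpha> \<alpha>"
  using assms B_sym[of \<alpha> \<gamma>]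
  by (simp add: B_diff_left B_diff_right B_scaleR_left B_scaleR_right span_scale span_diff
      power2_eq_square algebra_simps)

lemma string_norm_nonneg:
  assumes \<alpha>: "\<alpha> \<in> S" and \<gamma>: "\<gamma> \<in> span R" and root: "\<gamma> - k *\<^sub>R \<alpha> \<in> R"
    and k: "k * B \<alpha> \<alpha> < B \<alpha> \<gamma>"
  shows "0 \<le> B \<gamma> \<gamma> - 2 * k * B \<gamma> \<alpha> + k\<^sup>2 * B \<alpha> \<alpha>"
proof -
  have \<alpha>R: "\<alpha> \<in> span R" using S_in_span_R[OF \<alpha>] .
  have "B \<alpha> (\<gamma> - k *\<^sub>R \<alpha>) \<noteq> 0" using B_string_pairing[OF \<alpha>R \<gamma>] k by simp
  then have "0 \<le> B (\<gamma> - k *\<^sub>R \<alpha>) (\<gamma> - k *\<^sub>R \<alpha>)" using S_closed[OF \<alpha> root] B_pos by force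
  then show ?thesis using B_string_norm[OF \<alpha>R \<gamma>] by simp
qed

lemma string_coefficient_le:
  assumes \<alpha>: "\<alpha> \<in> S" and \<gamma>: "\<gamma> \<in> R" and n: "2 * B \<gamma> \<alpha> = of_int n * B \<alpha> \<alpha>"
  shows "n \<le> 4"
proof (rule ccontr)
  assume "\<not> n \<le> 4"
  then have n5: "5 \<le> real_of_int n" by simp
  define a where "a = B \<alpha> \<alpha>"
  have a: "0 < a" using B_pos[OF \<alpha>] by (simp add: a_def)
  have \<gamma>R: "\<gamma> \<in> span R" using \<gamma> span_base by auto
  obtain n' where n': "2 * B \<gamma> \<alpha> = of_int n' * B \<alpha> \<alpha>"
    and string: "\<forall>k\<in>{min 0 n'..max 0 n'}. \<gamma> - of_int k *\<^sub>R \<alpha> \<in> R"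
    using root_string[OF \<alpha> \<gamma>] by blast
  have "n' = n" using n n' a by (simp add: a_def)
  with string n5 have R1: "\<gamma> - 1 *\<^sub>R \<alpha> \<in> R" and R2: "\<gamma> - 2 *\<^sub>R \<alpha> \<in> R"
    using bspec[OF string, of 1] bspec[OF string, of 2] by auto
  have \<alpha>\<gamma>: "B \<alpha> \<gamma> = of_int n * a / 2" and \<gamma>\<alpha>: "B \<gamma> \<alpha> = of_int n * a / 2"
    using n B_sym[of \<alpha> \<gamma>] by (simp_all add: a_def)
  have pos: "0 < (of_int n - 1) * a" "0 < (of_int n - 2) * a" "0 < (of_int n - 4) * a"
    using a n5 by simp_all
  then have lt: "1 * a < B \<alpha> \<gamma>" "2 * a < B \<alpha> \<gamma>" using \<alpha>\<gamma> by (simp_all add: algebra_simps)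
  then have N1: "(of_int n - 1) * a \<le> B \<gamma> \<gamma>" and N2: "2 * (of_int n - 2) * a \<le> B \<gamma> \<gamma>"
    using string_norm_nonneg[OF \<alpha> \<gamma>R R1] string_norm_nonneg[OF \<alpha> \<gamma>R R2] \<gamma>\<alpha>
    by (simp_all add: a_def power2_eq_square algebra_simps)
  then have \<gamma>\<gamma>: "0 < B \<gamma> \<gamma>" using pos(1) by linarith
  moreover have "B \<alpha> \<gamma> \<noteq> 0" using lt(1) a by simp
  ultimately have "\<gamma> \<in> S" using S_closed[OF \<alpha> \<gamma>] by simp
  then obtain m where m: "2 * B \<alpha> \<gamma> = of_int m * B \<gamma> \<gamma>"
    using root_string \<alpha> S_subset_R by blast
  then have m\<gamma>: "of_int m * B \<gamma> \<gamma> = of_int n * a" using \<alpha>\<gamma> by simp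
  then have "0 < of_int m * B \<gamma> \<gamma>" using a n5 by simp
  then have "1 \<le> m" using \<gamma>\<gamma> by (simp add: zero_less_mult_iff)
  moreover have "\<not> 2 \<le> m"
  proof
    assume "2 \<le> m"
    then have "2 * B \<gamma> \<gamma> \<le> of_int n * a"
      using mult_right_mono[of 2 "of_int m" "B \<gamma> \<gamma>"] \<gamma>\<gamma> m\<gamma> by simp
    then show False using N1 pos(2) by (simp add: algebra_simps)
  qed
  ultimately have "m = 1" by simp
  then have "B \<gamma> \<gamma> = of_int n * a" using m\<gamma> by simp
  then show False using N2 pos(3) by (simp add: algebra_simps)
qed

lemma string_coefficient_bound:
  assumes "\<alpha> \<in> S" "\<gamma> \<in> R" "2 * B \<gamma> \<alpha> = of_int n * B \<alpha> \<alpha>"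
  shows "\<bar>n\<bar> \<le> 4"
proof -
  have \<alpha>R: "\<alpha> \<in> span R" and \<gamma>R: "\<gamma> \<in> span R" using S_in_span_R assms span_base by auto
  have "B \<gamma> (- \<alpha>) = - B \<gamma> \<alpha>" and "B (- \<alpha>) (- \<alpha>) = B \<alpha> \<alpha>"
    using B_uminus_left[OF \<alpha>R \<gamma>R] B_uminus_left[OF \<alpha>R span_neg[OF \<alpha>R]]
      B_uminus_left[OF \<alpha>R \<alpha>R] B_sym[of \<gamma>] B_sym[of "- \<alpha>" \<alpha>] by simp_all
  then have "2 * B \<gamma> (- \<alpha>) = of_int (- n) * B (- \<alpha>) (- \<alpha>)" using assms(3) by simp
  then have "- n \<le> 4" using string_coefficient_le uminus_S assms(1,2) by blast
  then show ?thesis using string_coefficient_le[OF assms] by linarith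
qed

definition reflect :: "'a \<Rightarrow> 'a \<Rightarrow> 'a" where
  "reflect \<alpha> x = x - (2 * B x \<alpha> / B \<alpha> \<alpha>) *\<^sub>R \<alpha>"

lemma reflect_in_span: "\<alpha> \<in> S \<Longrightarrow> x \<in> span S \<Longrightarrow> reflect \<alpha> x \<in> span S"
  unfolding reflect_def by (simp add: span_diff span_scale span_base)

lemma reflect_in_span_iff:
  assumes "\<alpha> \<in> S" shows "reflect \<alpha> x \<in> span S \<longleftrightarrow> x \<in> span S"
proof
  assume "reflect \<alpha> x \<in> span S"
  with assms have "reflect \<alpha> x + (2 * B x \<alpha> / B \<alpha> \<alpha>) *\<^sub>R \<alpha> \<in> span S"
    by (simp add: span_add span_scale span_base)
  then show "x \<in> span S" by (simp add: reflect_def)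
qed (rule reflect_in_span[OF assms])

lemma reflect_reflect: assumes \<alpha>: "\<alpha> \<in> S" and x: "x \<in> span R" shows "reflect \<alpha> (reflect \<alpha> x) = x"
proof -
  have \<alpha>R: "\<alpha> \<in> span R" using S_in_span_R[OF \<alpha>] .
  have "B (reflect \<alpha> x) \<alpha> = - B x \<alpha>"
    using B_pos[OF \<alpha>] \<alpha>R x unfolding reflect_def by (simp add: B_diff_left B_scaleR_left span_scale)
  then show ?thesis unfolding reflect_def[of \<alpha> "reflect \<alpha> x"] by (simp add: reflect_def)
qed

lemma reflect_root: assumes \<alpha>: "\<alpha> \<in> S" and \<gamma>: "\<gamma> \<in> R" shows "reflect \<alpha> \<gamma> \<in> R"
proof -
  obtain n :: int where n: "2 * B \<gamma> \<alpha> = of_int n * B \<alpha> \<alpha>"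
    and string: "\<forall>k\<in>{min 0 n..max 0 n}. \<gamma> - of_int k *\<^sub>R \<alpha> \<in> R"
    using root_string[OF \<alpha> \<gamma>] by blast
  have "reflect \<alpha> \<gamma> = \<gamma> - of_int n *\<^sub>R \<alpha>"
    using n B_pos[OF \<alpha>] unfolding reflect_def by simp
  then show ?thesis using string by simp
qed

lemma B_reflect:
  assumes \<alpha>: "\<alpha> \<in> S" and "\<gamma> \<in> span R" "x \<in> span R"
  shows "B \<gamma> (reflect \<alpha> x) = B (reflect \<alpha> \<gamma>) x"
  using assms S_in_span_R[OF \<alpha>] B_sym[of x \<alpha>] B_sym[of \<alpha> \<gamma>]
  by (simp add: reflect_def B_diff_left B_diff_right B_scaleR_left B_scaleR_right span_scale)

text \<open>Restricting to the span of S identifies roots inducing the same functional there,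
  which is what makes the family of these functionals finite.\<close>

definition restricted_pairing :: "'a \<Rightarrow> 'a \<Rightarrow> real" where
  "restricted_pairing \<gamma> x = (if x \<in> span S then B \<gamma> x else 0)"

definition pairings :: "('a \<Rightarrow> real) set" where
  "pairings = restricted_pairing ` R"

lemma pairings_linear:
  assumes "g \<in> pairings" "x \<in> span S" "y \<in> span S"
  shows "g (x + y) = g x + g y" and "g (r *\<^sub>R x) = r * g x"
proof -
  obtain \<gamma> where \<gamma>: "\<gamma> \<in> span R" and g: "g = restricted_pairing \<gamma>"
    using assms(1) span_base unfolding pairings_def by blast
  have "x \<in> span R" "y \<in> span R" using assms(2,3) span_S_subset by auto
  with \<gamma> assms(2,3) show "g (x + y) = g x + g y" and "g (r *\<^sub>R x) = r * g x"
    by (simp_all add: g restricted_pairing_def span_add span_scale B_add_right B_scaleR_right)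
qed

lemma restricted_pairing_eqI:
  assumes \<gamma>: "\<gamma> \<in> R" and \<delta>: "\<delta> \<in> R" and A: "A \<subseteq> S" "S \<subseteq> span A"
    and eq: "\<And>x. x \<in> A \<Longrightarrow> B \<gamma> x = B \<delta> x"
  shows "restricted_pairing \<gamma> = restricted_pairing \<delta>"
proof
  fix x
  have span_AR: "span A \<subseteq> span R" using A(1) span_S_subset span_mono[of A S] by blast
  have "x \<in> span A \<and> B \<gamma> x = B \<delta> x" if "x \<in> span A" using that
  proof (induction rule: span_induct_alt)
    case base
    then show ?case
      using B_zero_left[OF span_base[OF \<gamma>]] B_zero_left[OF span_base[OF \<delta>]] B_sym[of _ 0]
      by (simp add: span_zero)
  next
    case (step c a y)
    then have "a \<in> span R" "y \<in> span R" using span_AR span_base[of a A] by auto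
    with step \<gamma> \<delta> show ?case
      by (simp add: B_add_right B_scaleR_right span_add span_scale span_base eq)
  qed
  moreover have "span A = span S" using A span_superset unfolding span_eq by blast
  ultimately show "restricted_pairing \<gamma> x = restricted_pairing \<delta> x"
    by (simp add: restricted_pairing_def)
qed

lemma finite_pairings: "finite pairings"
proof -
  obtain A where A: "finite A" "A \<subseteq> S" "S \<subseteq> span A" using finite_spanning_subset by blast
  define allowed where "allowed \<alpha> = (\<lambda>k::int. of_int k * B \<alpha> \<alpha> / 2) ` {-4..4}" for \<alpha>
  have "restricted_pairing \<gamma> \<alpha> \<in> allowed \<alpha>" if \<gamma>: "\<gamma> \<in> R" and "\<alpha> \<in> A" for \<gamma> \<alpha>
  proof -
    have \<alpha>: "\<alpha> \<in> S" using A that(2) by blast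
    obtain n where n: "2 * B \<gamma> \<alpha> = of_int n * B \<alpha> \<alpha>" using root_string[OF \<alpha> \<gamma>] by blast
    have "n \<in> {-4..4}" using string_coefficient_bound[OF \<alpha> \<gamma> n] by (simp add: abs_le_iff)
    moreover have "restricted_pairing \<gamma> \<alpha> = of_int n * B \<alpha> \<alpha> / 2"
      using n span_base[OF \<alpha>] by (simp add: restricted_pairing_def)
    ultimately show ?thesis unfolding allowed_def by blast
  qed
  then have "(\<lambda>g. restrict g A) ` pairings \<subseteq> PiE A allowed" by (auto simp: pairings_def)
  moreover have "finite (PiE A allowed)" using A(1) by (simp add: allowed_def finite_PiE)
  ultimately have "finite ((\<lambda>g. restrict g A) ` pairings)" by (rule finite_subset)
  moreover have "inj_on (\<lambda>g. restrict g A) pairings"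
  proof (rule inj_onI, clarsimp simp: pairings_def)
    fix \<gamma> \<delta> assume \<gamma>: "\<gamma> \<in> R" and \<delta>: "\<delta> \<in> R"
      and eq: "restrict (restricted_pairing \<gamma>) A = restrict (restricted_pairing \<delta>) A"
    have "B \<gamma> x = B \<delta> x" if x: "x \<in> A" for x
    proof -
      have "x \<in> span S" using x A(2) span_base by blast
      then show ?thesis using fun_cong[OF eq, of x] x by (simp add: restricted_pairing_def)
    qed
    then show "restricted_pairing \<gamma> = restricted_pairing \<delta>"
      using restricted_pairing_eqI[OF \<gamma> \<delta> A(2,3)] by blast
  qed
  ultimately show ?thesis by (rule finite_imageD)
qed

lemma restricted_pairing_reflect:
  assumes \<alpha>: "\<alpha> \<in> S" and \<gamma>: "\<gamma> \<in> R"
  shows "restricted_pairing \<gamma> \<circ> reflect \<alpha> = restricted_pairing (reflect \<alpha> \<gamma>)"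
proof
  fix x
  show "(restricted_pairing \<gamma> \<circ> reflect \<alpha>) x = restricted_pairing (reflect \<alpha> \<gamma>) x"
  proof (cases "x \<in> span S")
    case True
    then have "x \<in> span R" using span_S_subset by blast
    then show ?thesis
      using True B_reflect[OF \<alpha> span_base[OF \<gamma>]] reflect_in_span_iff[OF \<alpha>]
      by (simp add: restricted_pairing_def)
  qed (simp add: restricted_pairing_def reflect_in_span_iff[OF \<alpha>])
qed

lemma bij_betw_pairings_reflect:
  assumes \<alpha>: "\<alpha> \<in> S" shows "bij_betw (\<lambda>g. g \<circ> reflect \<alpha>) pairings pairings"
proof -
  have maps: "(\<lambda>g. g \<circ> reflect \<alpha>) \<in> pairings \<rightarrow> pairings"
    using restricted_pairing_reflect[OF \<alpha>] reflect_root[OF \<alpha>] by (auto simp: pairings_def)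
  have "g \<circ> reflect \<alpha> \<circ> reflect \<alpha> = g" if "g \<in> pairings" for g
  proof
    fix x
    obtain \<gamma> where g: "g = restricted_pairing \<gamma>" using \<open>g \<in> pairings\<close> pairings_def by blast
    show "(g \<circ> reflect \<alpha> \<circ> reflect \<alpha>) x = g x"
    proof (cases "x \<in> span S")
      case True
      then show ?thesis using reflect_reflect[OF \<alpha>] span_S_subset by auto
    qed (simp add: g restricted_pairing_def reflect_in_span_iff[OF \<alpha>])
  qed
  then show ?thesis by (intro bij_betwI[OF maps maps]) simp_all
qed

definition invariant_form :: "'a \<Rightarrow> 'a \<Rightarrow> real" where
  "invariant_form x y = (\<Sum>g\<in>pairings. g x * g y)"

lemma invariant_form_sym: "invariant_form x y = invariant_form y x"
  by (simp add: invariant_form_def mult.commute)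

lemma invariant_form_linear:
  assumes "x \<in> span S" "y \<in> span S"
  shows "invariant_form (x + y) z = invariant_form x z + invariant_form y z"
    and "invariant_form (r *\<^sub>R x) z = r * invariant_form x z"
  using assms
  by (simp_all add: invariant_form_def pairings_linear sum.distrib sum_distrib_left
      algebra_simps cong: sum.cong)

lemma invariant_form_reflect:
  assumes \<alpha>: "\<alpha> \<in> S"
  shows "invariant_form (reflect \<alpha> x) (reflect \<alpha> y) = invariant_form x y"
  unfolding invariant_form_def
  using sum.reindex_bij_betw[OF bij_betw_pairings_reflect[OF \<alpha>], of "\<lambda>g. g x * g y"] by simp

lemma invariant_form_orthogonal:
  assumes \<alpha>: "\<alpha> \<in> S" and x: "x \<in> span S" and "B x \<alpha> = 0"
  shows "invariant_form \<alpha> x = 0"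
proof -
  have "reflect \<alpha> x = x" using assms(3) by (simp add: reflect_def)
  moreover have "reflect \<alpha> \<alpha> = - \<alpha>"
    using B_pos[OF \<alpha>] by (simp add: reflect_def scaleR_2)
  ultimately have "invariant_form \<alpha> x = invariant_form (- \<alpha>) x"
    using invariant_form_reflect[OF \<alpha>, of \<alpha> x] by simp
  also have "\<dots> = - invariant_form \<alpha> x"
    using span_base[OF \<alpha>] invariant_form_linear(2)[of \<alpha> \<alpha> "-1" x] by simp
  finally show ?thesis by simp
qed

definition form_ratio :: "'a \<Rightarrow> real" where
  "form_ratio \<alpha> = invariant_form \<alpha> \<alpha> / B \<alpha> \<alpha>"

lemma invariant_form_root:
  assumes \<alpha>: "\<alpha> \<in> S" and y: "y \<in> span S"
  shows "invariant_form \<alpha> y = form_ratio \<alpha> * B \<alpha> y"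
proof -
  have \<alpha>S: "\<alpha> \<in> span S" and \<alpha>R: "\<alpha> \<in> span R" and yR: "y \<in> span R"
    using \<alpha> y span_base S_in_span_R span_S_subset by auto
  define t where "t = B y \<alpha> / B \<alpha> \<alpha>"
  define x where "x = y - t *\<^sub>R \<alpha>"
  have x: "x \<in> span S" using y \<alpha>S by (simp add: x_def span_diff span_scale)
  have "B x \<alpha> = 0"
    using B_pos[OF \<alpha>] \<alpha>R yR by (simp add: x_def t_def B_diff_left B_scaleR_left span_scale)
  then have "invariant_form x \<alpha> = 0" using invariant_form_orthogonal[OF \<alpha> x] invariant_form_sym by simp
  then have "invariant_form y \<alpha> = t * invariant_form \<alpha> \<alpha>"
    using invariant_form_linear(1)[OF x span_scale[OF \<alpha>S, where c=t], where z=\<alpha>]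
      invariant_form_linear(2)[OF \<alpha>S \<alpha>S, where r=t and z=\<alpha>] by (simp add: x_def)
  then show ?thesis using B_sym[of y \<alpha>] invariant_form_sym[of y \<alpha>] by (simp add: t_def form_ratio_def)
qed

lemma form_ratio_pos: assumes \<alpha>: "\<alpha> \<in> S" shows "0 < form_ratio \<alpha>"
proof -
  have "restricted_pairing \<alpha> \<in> pairings" using \<alpha> S_subset_R by (auto simp: pairings_def)
  then have "restricted_pairing \<alpha> \<alpha> * restricted_pairing \<alpha> \<alpha> \<le> invariant_form \<alpha> \<alpha>"
    unfolding invariant_form_def by (rule member_le_sum) (simp_all add: finite_pairings)
  moreover have "restricted_pairing \<alpha> \<alpha> = B \<alpha> \<alpha>"
    using span_base[OF \<alpha>] by (simp add: restricted_pairing_def)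
  ultimately have "0 < invariant_form \<alpha> \<alpha>"
    using B_pos[OF \<alpha>] by (smt (verit) mult_pos_pos)
  then show ?thesis using B_pos[OF \<alpha>] by (simp add: form_ratio_def)
qed

lemma form_ratio_const: assumes "\<beta> \<in> S" shows "form_ratio \<beta> = form_ratio \<alpha>0"
  using S_connected[OF assms]
proof (induction rule: rtranclp_induct)
  case (step \<beta> \<gamma>)
  then have \<beta>: "\<beta> \<in> S" and \<gamma>: "\<gamma> \<in> S" and "B \<beta> \<gamma> \<noteq> 0" by auto
  have "form_ratio \<gamma> = form_ratio \<beta>"
    using invariant_form_root[OF \<beta> span_base[OF \<gamma>]] invariant_form_root[OF \<gamma> span_base[OF \<beta>]]
      invariant_form_sym[of \<beta> \<gamma>] B_sym[of \<beta> \<gamma>] \<open>B \<beta> \<gamma> \<noteq> 0\<close>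
    by auto
  then show ?case using step.IH by simp
qed simp

lemma invariant_form_eq:
  assumes x: "x \<in> span S" and y: "y \<in> span S"
  shows "invariant_form x y = form_ratio \<alpha>0 * B x y"
proof -
  have "x \<in> span S \<and> invariant_form x y = form_ratio \<alpha>0 * B x y" using x
  proof (induction rule: span_induct_alt)
    case base
    have "invariant_form 0 y = 0" using invariant_form_linear(2)[of 0 0 0 y] by (simp add: span_zero)
    then show ?case using B_zero_left y span_S_subset by (auto simp: span_zero)
  next
    case (step c \<alpha> z)
    have \<alpha>S: "\<alpha> \<in> span S" and \<alpha>R: "\<alpha> \<in> span R" and zR: "z \<in> span R" and yR: "y \<in> span R"
      using step y span_base S_in_span_R span_S_subset by auto
    have "invariant_form (c *\<^sub>R \<alpha> + z) y = c * invariant_form \<alpha> y + invariant_form z y"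
      using invariant_form_linear[OF span_scale[OF \<alpha>S] conjunct1[OF step(2)]]
        invariant_form_linear(2)[OF \<alpha>S \<alpha>S] by simp
    also have "\<dots> = form_ratio \<alpha>0 * B (c *\<^sub>R \<alpha> + z) y"
      using step invariant_form_root[OF step(1) y] form_ratio_const[OF step(1)] \<alpha>R zR yR
      by (simp add: B_add_left B_scaleR_left span_scale algebra_simps)
    finally show ?case using \<alpha>S step(2) by (simp add: span_add span_scale)
  qed
  then show ?thesis by simp
qed

theorem B_nonneg: assumes "x \<in> span S" shows "0 \<le> B x x"
proof -
  have "0 \<le> invariant_form x x" by (simp add: invariant_form_def sum_nonneg)
  then show ?thesis
    using invariant_form_eq[OF assms assms] form_ratio_pos[OF \<alpha>0_in_S]
    by (simp add: zero_le_mult_iff)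
qed

theorem B_isotropic_orthogonal:
  assumes x: "x \<in> span S" and "B x x = 0" and \<gamma>: "\<gamma> \<in> R"
  shows "B \<gamma> x = 0"
proof -
  have "invariant_form x x = 0" using invariant_form_eq[OF x x] assms(2) by simp
  then have "\<forall>g\<in>pairings. g x * g x = 0"
    unfolding invariant_form_def by (simp add: sum_nonneg_eq_0_iff finite_pairings)
  moreover have "restricted_pairing \<gamma> \<in> pairings" using \<gamma> by (simp add: pairings_def)
  ultimately have "restricted_pairing \<gamma> x = 0" by auto
  then show ?thesis using x by (simp add: restricted_pairing_def)
qed

end

instantiation "fun" :: (type, real_vector) real_vector
begin

definition scaleR_fun :: "real \<Rightarrow> ('a \<Rightarrow> 'b) \<Rightarrow> 'a \<Rightarrow> 'b" where
  "scaleR r f = (\<lambda>x. r *\<^sub>R f x)"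

instance
  by standard (simp_all add: scaleR_fun_def fun_eq_iff scaleR_add_right scaleR_add_left)

end

lemma scaleR_fun_apply [simp]: "(r *\<^sub>R f) x = r *\<^sub>R f x"
  by (simp add: scaleR_fun_def)

lemma sum_fun_apply: "(\<Sum>i\<in>I. f i) x = (\<Sum>i\<in>I. f i x)"
  by (induction I rule: infinite_finite_induct) auto

lemma finite_support_span:
  assumes C: "finite C"
  shows "\<exists>T. finite T \<and> {f :: 'a \<Rightarrow> complex. \<forall>x. x \<notin> C \<longrightarrow> f x = 0} \<subseteq> span T"
proof (intro exI conjI subsetI)
  define \<delta> where "\<delta> b z x = (if x = b then z else 0)" for b :: 'a and z :: complex and x
  let ?T = "(\<lambda>b. \<delta> b 1) ` C \<union> (\<lambda>b. \<delta> b \<i>) ` C"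
  show "finite ?T" using C by simp
  fix f :: "'a \<Rightarrow> complex" assume "f \<in> {f. \<forall>x. x \<notin> C \<longrightarrow> f x = 0}"
  then have "f = (\<Sum>b\<in>C. Re (f b) *\<^sub>R \<delta> b 1 + Im (f b) *\<^sub>R \<delta> b \<i>)"
  proof (intro ext)
    fix x
    have "(Re (f b) *\<^sub>R \<delta> b 1 + Im (f b) *\<^sub>R \<delta> b \<i>) x = (if x = b then f b else 0)" for b
      using complex_eq[of "f b"] by (simp add: \<delta>_def scaleR_conv_of_real mult.commute)
    then show "f x = (\<Sum>b\<in>C. Re (f b) *\<^sub>R \<delta> b 1 + Im (f b) *\<^sub>R \<delta> b \<i>) x"
      using C \<open>f \<in> _\<close> by (simp add: sum_fun_apply)
  qed
  also have "\<dots> \<in> span ?T"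
    by (intro span_sum span_add span_scale) (auto intro: span_base)
  finally show "f \<in> span ?T" .
qed

lemma rspan_eq_span: "rspan S = span S"
  unfolding rspan_def span_explicit
  by (auto simp: sum_fun_apply fun_eq_iff scaleR_conv_of_real)

lemma Re_eq_0_iff_Reals: "z \<in> \<real> \<Longrightarrow> Re z = 0 \<longleftrightarrow> z = 0"
  by (auto simp: complex_is_Real_iff complex_eq_iff)

section \<open>Generalized reductive Lie algebras\<close>

lemma funpow_last_nonzero:
  fixes g :: "'a \<Rightarrow> 'a::zero"
  assumes "(g ^^ N) v = 0" "v \<noteq> 0"
  obtains m where "\<And>j. j \<le> m \<Longrightarrow> (g ^^ j) v \<noteq> 0" "(g ^^ Suc m) v = 0"
proof -
  define M where "M = (LEAST n. (g ^^ n) v = 0)"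
  have "(g ^^ M) v = 0" unfolding M_def by (rule LeastI) (rule assms(1))
  moreover from this have "M \<noteq> 0" using assms(2) by (cases M) auto
  ultimately obtain m where "M = Suc m" "(g ^^ Suc m) v = 0" using not0_implies_Suc by blast
  moreover have "(g ^^ j) v \<noteq> 0" if "j < M" for j using not_less_Least[OF that[unfolded M_def]] .
  ultimately show ?thesis using that[of m] by (simp add: less_Suc_eq_le)
qed

lemma self_in_component: "\<alpha>0 \<in> component smul br Bf H \<alpha>0"
  by (simp add: component_def)

lemma component_subset_roots_x:
  assumes "\<alpha>0 \<in> roots_x smul br Bf H"
  shows "component smul br Bf H \<alpha>0 \<subseteq> roots_x smul br Bf H"
proof
  fix \<beta> assume "\<beta> \<in> component smul br Bf H \<alpha>0"
  then have "(\<lambda>\<alpha> \<gamma>. \<alpha> \<in> roots_x smul br Bf H \<and> \<gamma> \<in> roots_x smul br Bf H \<and> dform Bf H \<alpha> \<gamma> \<noteq> 0)\<^sup>*\<^sup>* \<alpha>0 \<beta>"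
    by (simp add: component_def)
  then show "\<beta> \<in> roots_x smul br Bf H" by (induction rule: rtranclp_induct) (use assms in auto)
qed

lemma component_closed:
  assumes "\<alpha>0 \<in> roots_x smul br Bf H" "\<beta> \<in> component smul br Bf H \<alpha>0"
    and "\<gamma> \<in> roots_x smul br Bf H" "dform Bf H \<beta> \<gamma> \<noteq> 0"
  shows "\<gamma> \<in> component smul br Bf H \<alpha>0"
  using assms component_subset_roots_x[OF assms(1)]
  by (auto simp: component_def intro: rtranclp.rtrancl_into_rtrancl)

locale gen_reductive_algebra =
  fixes smul :: "complex \<Rightarrow> 'g::ab_group_add \<Rightarrow> 'g" and br :: "'g \<Rightarrow> 'g \<Rightarrow> 'g"
    and Bf :: "'g \<Rightarrow> 'g \<Rightarrow> complex" and H :: "'g set"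
  assumes gen_reductive: "gen_reductive smul br Bf H"
begin

lemma vector_space_smul: "vector_space smul"
  using gen_reductive unfolding gen_reductive_def lie_algebra_def by blast

end

sublocale gen_reductive_algebra \<subseteq> V: vector_space smul
  by (rule vector_space_smul)

context gen_reductive_algebra
begin

abbreviation G :: "('g \<Rightarrow> complex) \<Rightarrow> 'g set" where
  "G \<alpha> \<equiv> rootspace smul br H \<alpha>"

lemma lie_algebra: "lie_algebra smul br"
  and good_form: "good_form smul br Bf"
  and subspace_H: "V.subspace H"
  and H_abelian: "\<forall>h\<in>H. \<forall>k\<in>H. br h k = 0"
  and centralizer_H: "{x. \<forall>h\<in>H. br h x = 0} = H"
  and span_eigenvectors_ad: "\<forall>h\<in>H. V.span (\<Union>c. {x. br h x = smul c x}) = UNIV"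
  and finite_basis_H: "\<exists>B. finite B \<and> B \<subseteq> H \<and> V.span B = H"
  and ad_locally_nilpotent:
    "\<forall>\<alpha>\<in>roots_x smul br Bf H. \<forall>x\<in>G \<alpha>. \<forall>y. \<exists>n. (br x ^^ n) y = 0"
  using gen_reductive unfolding gen_reductive_def ad_diagonalizable_def by blast+

lemma br_left_linear: "br (smul a x + y) z = smul a (br x z) + br y z"
  using lie_algebra unfolding lie_algebra_def by blast

lemma br_right_linear: "br z (smul a x + y) = smul a (br z x) + br z y"
  using lie_algebra unfolding lie_algebra_def by blast

lemma br_self: "br x x = 0"
  using lie_algebra unfolding lie_algebra_def by blast

lemma jacobi: "br x (br y z) + br y (br z x) + br z (br x y) = 0"
  using lie_algebra unfolding lie_algebra_def by blast

lemma Bf_left_linear: "Bf (smul a x + y) z = a * Bf x z + Bf y z"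
  using good_form unfolding good_form_def by blast

lemma Bf_sym: "Bf x y = Bf y x"
  using good_form unfolding good_form_def by blast

lemma Bf_nondegenerate: "(\<And>y. Bf x y = 0) \<Longrightarrow> x = 0"
  using good_form unfolding good_form_def by blast

lemma Bf_invariant: "Bf (br x y) z = Bf x (br y z)"
  using good_form unfolding good_form_def by blast

lemma br_add_left: "br (x + y) z = br x z + br y z"
  using br_left_linear[of 1 x y z] by simp

lemma br_add_right: "br z (x + y) = br z x + br z y"
  using br_right_linear[of z 1 x y] by simp

lemma br_zero_left [simp]: "br 0 z = 0"
  using br_add_left[of 0 0 z] by simp

lemma br_zero_right [simp]: "br z 0 = 0"
  using br_add_right[of z 0 0] by simp

lemma br_smul_left: "br (smul a x) z = smul a (br x z)"
  using br_left_linear[of a x 0 z] by simp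

lemma br_smul_right: "br z (smul a x) = smul a (br z x)"
  using br_right_linear[of z a x 0] by simp

lemma br_uminus_left: "br (- x) z = - br x z"
  using br_add_left[of x "- x" z] by (simp add: eq_neg_iff_add_eq_0 add.commute)

lemma br_uminus_right: "br z (- x) = - br z x"
  using br_add_right[of z x "- x"] by (simp add: eq_neg_iff_add_eq_0 add.commute)

lemma br_diff_right: "br z (x - y) = br z x - br z y"
  using br_add_right[of z x "- y"] by (simp add: br_uminus_right)

lemma br_antisym: "br x y = - br y x"
proof -
  have "br x y + br y x = br (x + y) (x + y)"
    by (simp only: br_add_left br_add_right) (simp add: br_self add.commute)
  also have "\<dots> = 0" by (rule br_self)
  finally show ?thesis by (simp add: eq_neg_iff_add_eq_0)
qed

lemma br_derivation: "br x (br y z) = br y (br x z) + br (br x y) z"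
  using jacobi[of x y z] br_antisym[of z x] br_antisym[of z "br x y"]
  by (simp add: br_uminus_right algebra_simps)

lemma br_sum_right: "br z (sum f I) = (\<Sum>i\<in>I. br z (f i))"
  by (induction I rule: infinite_finite_induct) (auto simp: br_add_right)

lemma Bf_add_left: "Bf (x + y) z = Bf x z + Bf y z"
  using Bf_left_linear[of 1 x y z] by simp

lemma Bf_add_right: "Bf z (x + y) = Bf z x + Bf z y"
  using Bf_add_left Bf_sym by metis

lemma Bf_zero_left [simp]: "Bf 0 z = 0"
  using Bf_add_left[of 0 0 z] by simp

lemma Bf_zero_right [simp]: "Bf z 0 = 0"
  using Bf_zero_left Bf_sym by metis

lemma Bf_smul_left: "Bf (smul a x) z = a * Bf x z"
  using Bf_left_linear[of a x 0 z] by simp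

lemma Bf_smul_right: "Bf z (smul a x) = a * Bf z x"
  using Bf_smul_left Bf_sym by metis

lemma Bf_uminus_left: "Bf (- x) z = - Bf x z"
  using Bf_add_left[of x "- x" z] by (simp add: eq_neg_iff_add_eq_0 add.commute)

lemma Bf_uminus_right: "Bf z (- x) = - Bf z x"
  using Bf_uminus_left Bf_sym by metis

lemma Bf_diff_left: "Bf (x - y) z = Bf x z - Bf y z"
  using Bf_add_left[of x "- y" z] by (simp add: Bf_uminus_left)

lemma H_zero: "0 \<in> H"
  and H_add: "x \<in> H \<Longrightarrow> y \<in> H \<Longrightarrow> x + y \<in> H"
  and H_smul: "x \<in> H \<Longrightarrow> smul a x \<in> H"
  and H_uminus: "x \<in> H \<Longrightarrow> - x \<in> H"
  and H_diff: "x \<in> H \<Longrightarrow> y \<in> H \<Longrightarrow> x - y \<in> H"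
  using subspace_H V.subspace_0 V.subspace_add V.subspace_scale V.subspace_neg V.subspace_diff
  by blast+

lemma smul_right_cancel: "smul c x = smul d x \<Longrightarrow> x \<noteq> 0 \<Longrightarrow> c = d"
  using V.scale_right_imp_eq by blast

lemma root_space_iff: "x \<in> G \<alpha> \<longleftrightarrow> (\<forall>h\<in>H. br h x = smul (\<alpha> h) x)"
  unfolding rootspace_def by simp

lemma subspace_root_space: "V.subspace (G \<alpha>)"
  by (rule V.subspaceI) (auto simp: root_space_iff br_add_right br_smul_right
      V.scale_right_distrib V.scale_left_commute)

lemma br_root_spaces: "x \<in> G \<alpha> \<Longrightarrow> y \<in> G \<beta> \<Longrightarrow> br x y \<in> G (\<lambda>h. \<alpha> h + \<beta> h)"
  unfolding root_space_iff
  by (simp add: br_derivation[of _ x y] br_smul_left br_smul_right V.scale_left_distrib add.commute)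

lemma Bf_root_spaces_orthogonal:
  assumes x: "x \<in> G \<alpha>" and y: "y \<in> G \<beta>" and h: "h \<in> H" and ne: "\<alpha> h + \<beta> h \<noteq> 0"
  shows "Bf x y = 0"
proof -
  have "\<alpha> h * Bf x y = Bf (br h x) y" using x h by (simp add: root_space_iff Bf_smul_left)
  also have "\<dots> = - Bf x (br h y)" by (metis br_antisym Bf_uminus_left Bf_invariant)
  also have "\<dots> = - (\<beta> h * Bf x y)" using y h by (simp add: root_space_iff Bf_smul_right)
  finally have "(\<alpha> h + \<beta> h) * Bf x y = 0" by (simp add: distrib_right)
  then show ?thesis using ne by simp
qed

subsection \<open>Root space decomposition\<close>

definition joint_eigenspace :: "'g set \<Rightarrow> ('g \<Rightarrow> complex) \<Rightarrow> 'g set" where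
  "joint_eigenspace C \<chi> = {x. \<forall>h\<in>C. br h x = smul (\<chi> h) x}"

lemma subspace_joint_eigenspace: "V.subspace (joint_eigenspace C \<chi>)"
  unfolding joint_eigenspace_def
  by (rule V.subspaceI) (auto simp: br_add_right br_smul_right V.scale_right_distrib V.scale_left_commute)

lemma eigenvectors_in_invariant_subspace:
  assumes W: "V.subspace W" and inv: "\<And>y. y \<in> W \<Longrightarrow> br b y \<in> W"
  shows "finite L \<Longrightarrow> \<forall>c\<in>L. br b (w c) = smul c (w c) \<Longrightarrow> sum w L \<in> W \<Longrightarrow> \<forall>c\<in>L. w c \<in> W"
proof (induction L arbitrary: w rule: finite_induct)
  case (insert l L)
  have s: "w l + sum w L \<in> W" using insert.prems(2) insert.hyps by simp
  have eigen: "br b (w c) = smul c (w c)" if "c \<in> insert l L" for c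
    using insert.prems(1) that by blast
  text \<open>Applying ad b - l kills the l-component and rescales the others by c - l.\<close>
  define w' where "w' c = smul (c - l) (w c)" for c
  have "br b (w l + sum w L) - smul l (w l + sum w L) = sum w' L"
    using eigen
    by (simp add: br_add_right br_sum_right V.scale_right_distrib V.scale_sum_right w'_def
        V.scale_left_diff_distrib sum_subtractf[symmetric])
  moreover have "br b (w l + sum w L) - smul l (w l + sum w L) \<in> W"
    using s inv W V.subspace_diff V.subspace_scale by blast
  moreover have "\<forall>c\<in>L. br b (w' c) = smul c (w' c)"
    using eigen by (simp add: w'_def br_smul_right V.scale_left_commute)
  ultimately have "\<forall>c\<in>L. w' c \<in> W" using insert.IH by simp
  moreover have "w c = smul (1 / (c - l)) (w' c)" if "c \<in> L" for c
    using that insert.hyps(2) by (auto simp: w'_def)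
  ultimately have wL: "\<forall>c\<in>L. w c \<in> W" using W V.subspace_scale by metis
  then have "sum w L \<in> W" by (intro V.subspace_sum[OF W]) blast
  then have "w l \<in> W" using V.subspace_diff[OF W s, of "sum w L"] by simp
  then show ?case using wL by blast
qed simp

lemma eigenvector_decomposition_in_invariant_subspace:
  assumes W: "V.subspace W" and inv: "\<And>y. y \<in> W \<Longrightarrow> br b y \<in> W" and xW: "x \<in> W"
    and xs: "x \<in> V.span (\<Union>c. {y. br b y = smul c y})"
  shows "x \<in> V.span (\<Union>c. W \<inter> {y. br b y = smul c y})"
proof -
  obtain t r where t: "finite t" "t \<subseteq> (\<Union>c. {y. br b y = smul c y})"
    and x: "x = (\<Sum>a\<in>t. smul (r a) a)"
    using xs unfolding V.span_explicit by blast
  define ev where "ev a = (SOME c. br b a = smul c a)" for a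
  have ev: "br b a = smul (ev a) a" if "a \<in> t" for a
  proof -
    have "\<exists>c. br b a = smul c a" using t that by blast
    then show ?thesis unfolding ev_def by (rule someI_ex)
  qed
  define w where "w c = (\<Sum>a\<in>{a. a \<in> t \<and> ev a = c}. smul (r a) a)" for c
  have x_sum: "x = sum w (ev ` t)" unfolding x w_def by (rule sum.image_gen[OF t(1)])
  have w_eigen: "\<forall>c\<in>ev ` t. br b (w c) = smul c (w c)"
    by (auto simp: w_def br_sum_right V.scale_sum_right br_smul_right ev V.scale_left_commute
        intro!: sum.cong)
  have "\<forall>c\<in>ev ` t. w c \<in> W"
    using eigenvectors_in_invariant_subspace[OF W inv, of "ev ` t" w] t(1) w_eigen xW x_sum by simp
  then have "\<forall>c\<in>ev ` t. w c \<in> V.span (\<Union>c. W \<inter> {y. br b y = smul c y})"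
    using w_eigen by (blast intro: V.span_base)
  then show ?thesis unfolding x_sum by (blast intro: V.span_sum)
qed

lemma span_joint_eigenspaces:
  assumes "finite C" "C \<subseteq> H" shows "V.span (\<Union>\<chi>. joint_eigenspace C \<chi>) = UNIV"
  using assms
proof (induction C rule: finite_induct)
  case empty
  then show ?case by (simp add: joint_eigenspace_def)
next
  case (insert b C)
  have bH: "b \<in> H" using insert by simp
  have "x \<in> V.span (\<Union>\<chi>. joint_eigenspace (insert b C) \<chi>)" if x: "x \<in> joint_eigenspace C \<chi>" for x \<chi>
  proof -
    have inv: "br b y \<in> joint_eigenspace C \<chi>" if "y \<in> joint_eigenspace C \<chi>" for y
      using that insert(4) H_abelian bH
      by (auto simp: joint_eigenspace_def br_derivation[of _ b y] br_smul_right)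
    have "x \<in> V.span (\<Union>c. joint_eigenspace C \<chi> \<inter> {y. br b y = smul c y})"
      using eigenvector_decomposition_in_invariant_subspace[OF subspace_joint_eigenspace inv x]
        span_eigenvectors_ad bH by simp
    moreover have "(\<Union>c. joint_eigenspace C \<chi> \<inter> {y. br b y = smul c y})
        \<subseteq> (\<Union>\<chi>. joint_eigenspace (insert b C) \<chi>)"
    proof clarify
      fix y c assume "y \<in> joint_eigenspace C \<chi>" "br b y = smul c y"
      then have "y \<in> joint_eigenspace (insert b C) (\<chi>(b := c))"
        using insert(2) by (auto simp: joint_eigenspace_def)
      then show "y \<in> (\<Union>\<chi>. joint_eigenspace (insert b C) \<chi>)" by blast
    qed
    ultimately show ?thesis using V.span_mono by blast
  qed
  then have "V.span (\<Union>\<chi>. joint_eigenspace C \<chi>) \<subseteq> V.span (\<Union>\<chi>. joint_eigenspace (insert b C) \<chi>)"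
    by (intro V.span_minimal) (auto simp: V.subspace_span)
  then show ?case using insert by auto
qed

lemma zero_in_Hdual: "(\<lambda>_. 0) \<in> Hdual smul H"
  unfolding Hdual_def by simp

lemma Hdual_linear: "\<alpha> \<in> Hdual smul H \<Longrightarrow> x \<in> H \<Longrightarrow> y \<in> H \<Longrightarrow> \<alpha> (smul a x + y) = a * \<alpha> x + \<alpha> y"
  and Hdual_outside: "\<alpha> \<in> Hdual smul H \<Longrightarrow> x \<notin> H \<Longrightarrow> \<alpha> x = 0"
  unfolding Hdual_def by blast+

lemma Hdual_smul: "\<alpha> \<in> Hdual smul H \<Longrightarrow> x \<in> H \<Longrightarrow> \<alpha> (smul a x) = a * \<alpha> x"
  using Hdual_linear[of \<alpha> x 0 a] Hdual_linear[of \<alpha> 0 0 1] H_zero by simp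

lemma Hdual_uminus_arg: "\<alpha> \<in> Hdual smul H \<Longrightarrow> x \<in> H \<Longrightarrow> \<alpha> (- x) = - \<alpha> x"
  using Hdual_smul[of \<alpha> x "-1"] by (simp add: V.scale_minus_left[of 1, simplified])

lemma Hdual_combination:
  "\<alpha> \<in> Hdual smul H \<Longrightarrow> \<beta> \<in> Hdual smul H \<Longrightarrow> (\<lambda>x. a * \<alpha> x + b * \<beta> x) \<in> Hdual smul H"
  unfolding Hdual_def by (auto simp: algebra_simps)

lemma joint_eigenvector_in_root_space:
  assumes C: "V.span C = H" and x: "x \<in> joint_eigenspace C \<chi>" "x \<noteq> 0"
  obtains \<alpha> where "\<alpha> \<in> Hdual smul H" "x \<in> G \<alpha>"
proof -
  have "V.subspace {h. \<exists>c. br h x = smul c x}"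
    by (rule V.subspaceI) (auto simp: br_add_left br_smul_left V.scale_left_distrib
        intro: exI[of _ 0] exI[of _ "_ + _"] exI[of _ "_ * _"])
  moreover have "C \<subseteq> {h. \<exists>c. br h x = smul c x}"
    using x(1) by (auto simp: joint_eigenspace_def)
  ultimately have HS: "H \<subseteq> {h. \<exists>c. br h x = smul c x}" using V.span_minimal C by blast
  define \<alpha> where "\<alpha> h = (if h \<in> H then (THE c. br h x = smul c x) else 0)" for h
  have \<alpha>: "br h x = smul (\<alpha> h) x" if h: "h \<in> H" for h
  proof -
    obtain c where c: "br h x = smul c x" using HS h by blast
    then have "\<alpha> h = c" using h smul_right_cancel[OF _ x(2)] by (auto simp: \<alpha>_def)
    then show ?thesis using c by simp
  qed
  have "\<alpha> \<in> Hdual smul H"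
    unfolding Hdual_def
  proof (intro CollectI conjI allI impI)
    fix a h1 h2 assume h: "h1 \<in> H" "h2 \<in> H"
    then have "smul (\<alpha> (smul a h1 + h2)) x = smul (a * \<alpha> h1 + \<alpha> h2) x"
      using \<alpha>[of h1] \<alpha>[of h2] \<alpha>[of "smul a h1 + h2"] H_add H_smul
      by (simp add: br_left_linear V.scale_left_distrib)
    then show "\<alpha> (smul a h1 + h2) = a * \<alpha> h1 + \<alpha> h2" using smul_right_cancel x(2) by blast
  qed (simp add: \<alpha>_def)
  moreover have "x \<in> G \<alpha>" using \<alpha> by (simp add: root_space_iff)
  ultimately show ?thesis by (rule that)
qed

lemma span_root_spaces: "V.span (\<Union>\<alpha>\<in>Hdual smul H. G \<alpha>) = UNIV"
proof -
  obtain C where C: "finite C" "C \<subseteq> H" "V.span C = H" using finite_basis_H by blast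
  have "joint_eigenspace C \<chi> \<subseteq> (\<Union>\<alpha>\<in>Hdual smul H. G \<alpha>)" for \<chi>
  proof
    fix x assume x: "x \<in> joint_eigenspace C \<chi>"
    show "x \<in> (\<Union>\<alpha>\<in>Hdual smul H. G \<alpha>)"
    proof (cases "x = 0")
      case True
      then show ?thesis using zero_in_Hdual V.subspace_0[OF subspace_root_space] by blast
    next
      case False
      then show ?thesis using joint_eigenvector_in_root_space[OF C(3) x] by blast
    qed
  qed
  then have "V.span (\<Union>\<chi>. joint_eigenspace C \<chi>) \<subseteq> V.span (\<Union>\<alpha>\<in>Hdual smul H. G \<alpha>)"
    by (intro V.span_mono) blast
  then show ?thesis using span_joint_eigenspaces[OF C(1,2)] by auto
qed

lemma Bf_eq_0_if_root_spaces:
  assumes "\<And>\<alpha> y. \<alpha> \<in> Hdual smul H \<Longrightarrow> y \<in> G \<alpha> \<Longrightarrow> Bf x y = 0"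
  shows "Bf x z = 0"
proof -
  have "z \<in> V.span (\<Union>\<alpha>\<in>Hdual smul H. G \<alpha>)" using span_root_spaces by simp
  then show ?thesis
    by (induction rule: V.span_induct_alt) (auto simp: Bf_add_right Bf_smul_right assms)
qed

lemma Bf_nondegenerate_H:
  assumes h: "h \<in> H" and orth: "\<And>k. k \<in> H \<Longrightarrow> Bf h k = 0"
  shows "h = 0"
proof (rule Bf_nondegenerate, rule Bf_eq_0_if_root_spaces)
  fix \<alpha> y assume "\<alpha> \<in> Hdual smul H" and y: "y \<in> G \<alpha>"
  show "Bf h y = 0"
  proof (cases "\<exists>k\<in>H. \<alpha> k \<noteq> 0")
    case True
    then obtain k where "k \<in> H" "\<alpha> k \<noteq> 0" by blast
    moreover have "h \<in> G (\<lambda>_. 0)" using h H_abelian by (simp add: root_space_iff)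
    ultimately show ?thesis using Bf_root_spaces_orthogonal[OF _ y] by simp
  next
    case False
    then have "y \<in> H" using y centralizer_H by (auto simp: root_space_iff)
    then show ?thesis using orth by blast
  qed
qed

lemma roots_in_Hdual: "\<alpha> \<in> roots smul br H \<Longrightarrow> \<alpha> \<in> Hdual smul H"
  unfolding roots_def by blast

lemma root_vector_exists: "\<alpha> \<in> roots smul br H \<Longrightarrow> \<exists>x\<in>G \<alpha>. x \<noteq> 0"
  unfolding roots_def using V.subspace_0[OF subspace_root_space] by blast

lemma rootI: "\<alpha> \<in> Hdual smul H \<Longrightarrow> x \<in> G \<alpha> \<Longrightarrow> x \<noteq> 0 \<Longrightarrow> \<alpha> \<in> roots smul br H"
  unfolding roots_def by auto

lemma dual_root_vector:
  assumes \<alpha>: "\<alpha> \<in> Hdual smul H" and x: "x \<in> G \<alpha>" "x \<noteq> 0"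
  obtains y where "y \<in> G (- \<alpha>)" "Bf x y = 1"
proof -
  obtain \<beta> y where \<beta>: "\<beta> \<in> Hdual smul H" and y: "y \<in> G \<beta>" and xy: "Bf x y \<noteq> 0"
    using Bf_nondegenerate Bf_eq_0_if_root_spaces x(2) by metis
  have "\<beta> = - \<alpha>"
  proof
    fix k show "\<beta> k = (- \<alpha>) k"
      using Bf_root_spaces_orthogonal[OF x(1) y, of k] xy Hdual_outside[OF \<alpha>, of k]
        Hdual_outside[OF \<beta>, of k]
      by (cases "k \<in> H") (auto simp: add_eq_0_iff)
  qed
  then show ?thesis
    using xy subspace_root_space y V.subspace_scale[of "G \<beta>" y "1 / Bf x y"]
    by (intro that[of "smul (1 / Bf x y) y"]) (simp_all add: Bf_smul_right)
qed

lemma br_dual_root_vectors: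
  assumes x: "x \<in> G \<alpha>" and y: "y \<in> G (- \<alpha>)" and xy: "Bf x y = 1"
  shows "br x y \<in> H" and "h \<in> H \<Longrightarrow> Bf (br x y) h = \<alpha> h"
proof -
  show "br x y \<in> H"
    using br_root_spaces[OF x y] centralizer_H by (auto simp: root_space_iff)
  assume h: "h \<in> H"
  have "Bf (br x y) h = - Bf x (br h y)" by (metis Bf_invariant br_antisym Bf_uminus_right)
  then show "Bf (br x y) h = \<alpha> h"
    using y h xy by (simp add: root_space_iff Bf_smul_right Bf_uminus_right)
qed

text \<open>tvec is meaningful only on representable functionals (elsewhere THE has no witness);
  on them the representing element is unique by nondegeneracy of the form on H.\<close>

definition representable :: "('g \<Rightarrow> complex) set" where
  "representable = {\<phi>. \<exists>t\<in>H. \<forall>h\<in>H. Bf t h = \<phi> h}"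

lemma tvec_eqI:
  assumes t: "t \<in> H" and \<phi>: "\<forall>h\<in>H. Bf t h = \<phi> h"
  shows "tvec Bf H \<phi> = t"
  unfolding tvec_def
proof (rule the_equality)
  fix t' assume t': "t' \<in> H \<and> (\<forall>h\<in>H. Bf t' h = \<phi> h)"
  have "t' - t = 0" by (rule Bf_nondegenerate_H) (use t t' \<phi> H_diff in \<open>auto simp: Bf_diff_left\<close>)
  then show "t' = t" by simp
qed (use assms in blast)

lemma tvec_representable:
  assumes "\<phi> \<in> representable"
  shows "tvec Bf H \<phi> \<in> H" and "h \<in> H \<Longrightarrow> Bf (tvec Bf H \<phi>) h = \<phi> h"
  using assms tvec_eqI unfolding representable_def by force+

lemma dform_eq_apply: "\<phi> \<in> representable \<Longrightarrow> \<psi> \<in> representable \<Longrightarrow> dform Bf H \<phi> \<psi> = \<phi> (tvec Bf H \<psi>)"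
  unfolding dform_def by (metis tvec_representable)

lemma dform_sym: "dform Bf H \<phi> \<psi> = dform Bf H \<psi> \<phi>"
  unfolding dform_def by (rule Bf_sym)

lemma root_representable: assumes "\<alpha> \<in> roots smul br H" shows "\<alpha> \<in> representable"
proof -
  obtain x where x: "x \<in> G \<alpha>" "x \<noteq> 0" using root_vector_exists[OF assms] by blast
  obtain y where "y \<in> G (- \<alpha>)" "Bf x y = 1"
    using dual_root_vector[OF roots_in_Hdual[OF assms] x] by blast
  then show ?thesis unfolding representable_def using br_dual_root_vectors[OF x(1)] by blast
qed

subsection \<open>sl2-triples and root strings\<close>

lemma tvec_uminus:
  assumes "\<alpha> \<in> representable" shows "tvec Bf H (- \<alpha>) = - tvec Bf H \<alpha>"
  using tvec_representable[OF assms] by (intro tvec_eqI) (auto simp: H_uminus Bf_uminus_left)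

lemma uminus_roots_x: assumes \<alpha>: "\<alpha> \<in> roots_x smul br Bf H" shows "- \<alpha> \<in> roots_x smul br Bf H"
proof -
  have r: "\<alpha> \<in> roots smul br H" using \<alpha> by (simp add: roots_x_def)
  obtain x where x: "x \<in> G \<alpha>" "x \<noteq> 0" using root_vector_exists[OF r] by blast
  obtain y where y: "y \<in> G (- \<alpha>)" "Bf x y = 1"
    using dual_root_vector[OF roots_in_Hdual[OF r] x] by blast
  have Hdual: "- \<alpha> \<in> Hdual smul H"
    using Hdual_combination[OF roots_in_Hdual[OF r] zero_in_Hdual, of "-1" 0]
    by (simp add: fun_Compl_def)
  have "y \<noteq> 0" using y(2) by auto
  then have "- \<alpha> \<in> roots smul br H" by (rule rootI[OF Hdual y(1)])
  moreover have "dform Bf H (- \<alpha>) (- \<alpha>) = dform Bf H \<alpha> \<alpha>"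
    using tvec_uminus[OF root_representable[OF r]] by (simp add: dform_def Bf_uminus_left Bf_uminus_right)
  ultimately show ?thesis using \<alpha> by (simp add: roots_x_def)
qed

lemma ad_power_root_space:
  assumes e: "e \<in> G \<alpha>" and x: "x \<in> G \<beta>"
  shows "(br e ^^ j) x \<in> G (\<lambda>h. \<beta> h + of_nat j * \<alpha> h)"
proof (induction j)
  case (Suc j)
  from br_root_spaces[OF e this] show ?case by (simp add: algebra_simps)
qed (use x in simp)

lemma sl2_triple:
  assumes \<alpha>: "\<alpha> \<in> roots_x smul br Bf H"
  obtains e f h where "h \<in> H" "e \<in> G \<alpha>" "f \<in> G (- \<alpha>)" "\<alpha> h = 2"
    "br h e = smul 2 e" "br h f = smul (-2) f" "br e f = h"
    "h = smul (2 / dform Bf H \<alpha> \<alpha>) (tvec Bf H \<alpha>)"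
proof -
  have r: "\<alpha> \<in> roots smul br H" and d0: "dform Bf H \<alpha> \<alpha> \<noteq> 0" using \<alpha> by (auto simp: roots_x_def)
  have Hdual: "\<alpha> \<in> Hdual smul H" using roots_in_Hdual[OF r] .
  obtain x where x: "x \<in> G \<alpha>" "x \<noteq> 0" using root_vector_exists[OF r] by blast
  obtain y where y: "y \<in> G (- \<alpha>)" "Bf x y = 1" using dual_root_vector[OF Hdual x] by blast
  define t where "t = br x y"
  have t: "t \<in> H" "\<And>h. h \<in> H \<Longrightarrow> Bf t h = \<alpha> h"
    using br_dual_root_vectors[OF x(1) y] by (simp_all add: t_def)
  have tvec: "tvec Bf H \<alpha> = t" using tvec_eqI t by blast
  define d where "d = dform Bf H \<alpha> \<alpha>"
  have d: "d = \<alpha> t"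
    using dform_eq_apply[OF root_representable[OF r] root_representable[OF r]] tvec by (simp add: d_def)
  define h where "h = smul (2 / d) t"
  show ?thesis
  proof (rule that[of h x "smul (2 / d) y"])
    show "h \<in> H" using t H_smul by (simp add: h_def)
    show "x \<in> G \<alpha>" by (rule x)
    show "smul (2 / d) y \<in> G (- \<alpha>)" using y(1) subspace_root_space V.subspace_scale by blast
    show "\<alpha> h = 2" using Hdual_smul[OF Hdual t(1)] d d0 by (simp add: h_def d_def)
    show "br h x = smul 2 x"
      using x(1) t(1) d d0 by (simp add: h_def root_space_iff br_smul_left d_def)
    show "br h (smul (2 / d) y) = smul (-2) (smul (2 / d) y)"
      using y(1) t(1) d d0 by (simp add: h_def root_space_iff br_smul_left br_smul_right d_def)
    show "br x (smul (2 / d) y) = h" by (simp add: h_def t_def br_smul_right)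
    show "h = smul (2 / dform Bf H \<alpha> \<alpha>) (tvec Bf H \<alpha>)" by (simp add: h_def tvec d_def)
  qed
qed

lemma sl2_highest_weight:
  assumes hf: "br h f = smul (-2) f" and ef: "br e f = h"
    and w: "w \<noteq> 0" "br e w = 0" "br h w = smul \<mu> w" and f_nil: "(br f ^^ N) w = 0"
  obtains n :: nat where "\<mu> = of_nat n" "\<And>j. j \<le> n \<Longrightarrow> (br f ^^ j) w \<noteq> 0"
proof -
  define v where "v j = (br f ^^ j) w" for j
  have v_Suc: "v (Suc j) = br f (v j)" for j by (simp add: v_def)
  have h_v: "br h (v j) = smul (\<mu> - 2 * of_nat j) (v j)" for j
  proof (induction j)
    case (Suc j)
    have "br h (v (Suc j)) = br f (br h (v j)) + br (br h f) (v j)"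
      unfolding v_Suc by (rule br_derivation)
    also have "\<dots> = smul (\<mu> - 2 * of_nat j - 2) (v (Suc j))"
      by (simp add: Suc hf v_Suc br_smul_left br_smul_right br_uminus_left br_diff_right
          V.scale_left_diff_distrib)
    finally show ?case by (simp add: algebra_simps)
  qed (use w(3) in \<open>simp add: v_def\<close>)
  have e_v: "br e (v (Suc j)) = smul (of_nat (Suc j) * (\<mu> - of_nat j)) (v j)" for j
  proof (induction j)
    case 0
    show ?case using br_derivation[of e f w] w(2,3) ef by (simp add: v_def)
  next
    case (Suc j)
    have "br e (v (Suc (Suc j))) = br f (br e (v (Suc j))) + br (br e f) (v (Suc j))"
      unfolding v_Suc[of "Suc j"] by (rule br_derivation)
    also have "\<dots> = smul (of_nat (Suc j) * (\<mu> - of_nat j) + (\<mu> - 2 * of_nat (Suc j))) (v (Suc j))"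
      unfolding Suc ef h_v by (simp add: v_Suc br_smul_right V.scale_left_distrib)
    finally show ?case by (simp add: algebra_simps)
  qed
  obtain n where nonzero: "\<And>j. j \<le> n \<Longrightarrow> v j \<noteq> 0" and "v (Suc n) = 0"
    using funpow_last_nonzero[OF f_nil w(1)] unfolding v_def by blast
  then have "of_nat (Suc n) * (\<mu> - of_nat n) = (0::complex)" using e_v[of n] by simp
  then have "\<mu> = of_nat n" by (simp del: of_nat_Suc)
  then show ?thesis using that nonzero by (simp add: v_def)
qed

lemma string_rootI:
  assumes "\<alpha> \<in> Hdual smul H" "\<beta> \<in> Hdual smul H" "x \<in> G (\<lambda>z. \<beta> z + of_real r * \<alpha> z)" "x \<noteq> 0"
  shows "\<beta> + r *\<^sub>R \<alpha> \<in> roots smul br H"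
proof -
  have "(\<lambda>z. \<beta> z + of_real r * \<alpha> z) = \<beta> + r *\<^sub>R \<alpha>" by (simp add: fun_eq_iff scaleR_conv_of_real)
  moreover have "\<beta> + r *\<^sub>R \<alpha> \<in> Hdual smul H"
    using Hdual_combination[OF assms(2,1), of 1 "of_real r"] calculation by simp
  ultimately show ?thesis using rootI assms(3,4) by auto
qed

lemma root_string_nonneg:
  assumes h: "h \<in> H" and e: "e \<in> G \<alpha>" and f: "f \<in> G (- \<alpha>)" and \<alpha>h: "\<alpha> h = 2"
    and hf: "br h f = smul (-2) f" and ef: "br e f = h"
    and e_nil: "\<forall>y. \<exists>N. (br e ^^ N) y = 0" and f_nil: "\<forall>y. \<exists>N. (br f ^^ N) y = 0"
    and \<alpha>: "\<alpha> \<in> Hdual smul H" and \<beta>: "\<beta> \<in> roots smul br H"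
  obtains n :: int where "\<beta> h = of_int n" "\<And>k. k \<in> {0..n} \<Longrightarrow> \<beta> - of_int k *\<^sub>R \<alpha> \<in> roots smul br H"
proof -
  text \<open>Climb with e to a highest weight vector w, then descend with f.\<close>
  obtain v where v: "v \<in> G \<beta>" "v \<noteq> 0" using root_vector_exists[OF \<beta>] by blast
  obtain N where "(br e ^^ N) v = 0" using e_nil by blast
  from funpow_last_nonzero[OF this v(2)]
  obtain m where w0: "(br e ^^ m) v \<noteq> 0" and ew: "br e ((br e ^^ m) v) = 0" by auto
  define w where "w = (br e ^^ m) v"
  have wG: "w \<in> G (\<lambda>z. \<beta> z + of_nat m * \<alpha> z)" unfolding w_def by (rule ad_power_root_space[OF e v(1)])
  then have hw: "br h w = smul (\<beta> h + 2 * of_nat m) w" using h \<alpha>h by (simp add: root_space_iff mult.commute)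
  obtain N' where fw: "(br f ^^ N') w = 0" using f_nil by blast
  obtain N where N: "\<beta> h + 2 * of_nat m = of_nat N" and nz: "\<And>j. j \<le> N \<Longrightarrow> (br f ^^ j) w \<noteq> 0"
    by (rule sl2_highest_weight[OF hf ef w0[folded w_def] ew[folded w_def] hw fw]) blast
  show ?thesis
  proof (rule that[of "int N - 2 * int m"])
    show "\<beta> h = of_int (int N - 2 * int m)" using N by (simp add: algebra_simps)
    fix k assume k: "k \<in> {0..int N - 2 * int m}"
    define j where "j = nat (int m + k)"
    have "(of_nat j :: complex) = of_int (int m + k)" using k by (simp add: j_def)
    then have "(\<lambda>z. (\<beta> z + of_nat m * \<alpha> z) + of_nat j * (- \<alpha>) z) = (\<lambda>z. \<beta> z + of_real (- of_int k) * \<alpha> z)"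
      by (auto simp: algebra_simps fun_eq_iff)
    then have "(br f ^^ j) w \<in> G (\<lambda>z. \<beta> z + of_real (- of_int k) * \<alpha> z)"
      using ad_power_root_space[OF f wG, of j] by simp
    moreover have "j \<le> N" using k unfolding j_def by (subst nat_le_iff) simp
    ultimately have "\<beta> + (- of_int k) *\<^sub>R \<alpha> \<in> roots smul br H"
      using string_rootI[OF \<alpha> roots_in_Hdual[OF \<beta>]] nz by blast
    then show "\<beta> - of_int k *\<^sub>R \<alpha> \<in> roots smul br H" by simp
  qed
qed

lemma root_string:
  assumes \<alpha>: "\<alpha> \<in> roots_x smul br Bf H" and \<beta>: "\<beta> \<in> roots smul br H"
  obtains n :: int where "2 * dform Bf H \<beta> \<alpha> = of_int n * dform Bf H \<alpha> \<alpha>"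
    "\<And>k. k \<in> {min 0 n..max 0 n} \<Longrightarrow> \<beta> - of_int k *\<^sub>R \<alpha> \<in> roots smul br H"
proof -
  obtain e f h where h: "h \<in> H" and e: "e \<in> G \<alpha>" and f: "f \<in> G (- \<alpha>)" and \<alpha>h: "\<alpha> h = 2"
    and he: "br h e = smul 2 e" and hf: "br h f = smul (-2) f" and ef: "br e f = h"
    and h_def: "h = smul (2 / dform Bf H \<alpha> \<alpha>) (tvec Bf H \<alpha>)"
    using sl2_triple[OF \<alpha>] by blast
  have r: "\<alpha> \<in> roots smul br H" and d0: "dform Bf H \<alpha> \<alpha> \<noteq> 0" using \<alpha> by (auto simp: roots_x_def)
  have Hdual: "\<alpha> \<in> Hdual smul H" "- \<alpha> \<in> Hdual smul H" "\<beta> \<in> Hdual smul H"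
    using roots_in_Hdual r \<beta> uminus_roots_x[OF \<alpha>] by (auto simp: roots_x_def)
  have e_nil: "\<forall>y. \<exists>N. (br e ^^ N) y = 0" and f_nil: "\<forall>y. \<exists>N. (br f ^^ N) y = 0"
    using ad_locally_nilpotent \<alpha> e f uminus_roots_x by blast+
  text \<open>The upward half of the string comes from the triple (e, f, h), the downward half
    from (f, e, -h).\<close>
  obtain n where \<beta>h: "\<beta> h = of_int n"
    and up: "\<And>k. k \<in> {0..n} \<Longrightarrow> \<beta> - of_int k *\<^sub>R \<alpha> \<in> roots smul br H"
    by (rule root_string_nonneg[OF h e f \<alpha>h hf ef e_nil f_nil Hdual(1) \<beta>]) blast
  have "(- \<alpha>) (- h) = 2" using Hdual_uminus_arg[OF Hdual(1) h] \<alpha>h by simp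
  moreover have "br (- h) e = smul (-2) e" using he by (simp add: br_uminus_left)
  moreover have "br f e = - h" using ef br_antisym by metis
  ultimately obtain n' where \<beta>h': "\<beta> (- h) = of_int n'"
    and down: "\<And>k. k \<in> {0..n'} \<Longrightarrow> \<beta> - of_int k *\<^sub>R (- \<alpha>) \<in> roots smul br H"
    using root_string_nonneg[OF H_uminus[OF h] f _ _ _ _ f_nil e_nil Hdual(2) \<beta>] e by auto
  have "(of_int n' :: complex) = of_int (- n)" using \<beta>h \<beta>h' Hdual_uminus_arg[OF Hdual(3) h] by simp
  then have n': "n' = - n" by (simp only: of_int_eq_iff)
  show ?thesis
  proof
    have "\<beta> h = 2 / dform Bf H \<alpha> \<alpha> * \<beta> (tvec Bf H \<alpha>)"
      using Hdual_smul[OF Hdual(3) tvec_representable(1)] root_representable[OF r] h_def by simp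
    also have "\<beta> (tvec Bf H \<alpha>) = dform Bf H \<beta> \<alpha>"
      using dform_eq_apply[OF root_representable[OF \<beta>] root_representable[OF r]] by simp
    finally show "2 * dform Bf H \<beta> \<alpha> = of_int n * dform Bf H \<alpha> \<alpha>"
      using \<beta>h d0 by (simp add: field_simps)
  next
    fix k :: int assume "k \<in> {min 0 n..max 0 n}"
    then show "\<beta> - of_int k *\<^sub>R \<alpha> \<in> roots smul br H"
      using up[of k] down[of "- k"] n' by (cases "0 \<le> n") auto
  qed
qed

lemma subspace_Hdual: "subspace (Hdual smul H)"
  by (rule subspaceI) (auto simp: Hdual_def algebra_simps scaleR_conv_of_real)

lemma subspace_representable: "subspace representable"
proof (rule subspaceI)
  show "0 \<in> representable" using H_zero by (auto simp: representable_def intro: bexI[of _ 0])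
next
  fix \<phi> \<psi> assume "\<phi> \<in> representable" "\<psi> \<in> representable"
  then obtain t u where "t \<in> H" "\<forall>h\<in>H. Bf t h = \<phi> h" "u \<in> H" "\<forall>h\<in>H. Bf u h = \<psi> h"
    by (auto simp: representable_def)
  then show "\<phi> + \<psi> \<in> representable"
    by (auto simp: representable_def Bf_add_left H_add intro!: bexI[of _ "t + u"])
next
  fix r :: real and \<phi> assume "\<phi> \<in> representable"
  then obtain t where "t \<in> H" "\<forall>h\<in>H. Bf t h = \<phi> h" by (auto simp: representable_def)
  then show "r *\<^sub>R \<phi> \<in> representable"
    by (auto simp: representable_def Bf_smul_left H_smul scaleR_conv_of_real
        intro!: bexI[of _ "smul (of_real r) t"])
qed

lemma span_roots_representable: "span (roots smul br H) \<subseteq> representable"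
  using root_representable by (intro span_minimal subspace_representable) blast

lemma dform_add_left:
  "\<phi> \<in> representable \<Longrightarrow> \<psi> \<in> representable \<Longrightarrow> \<chi> \<in> representable \<Longrightarrow>
    dform Bf H (\<phi> + \<psi>) \<chi> = dform Bf H \<phi> \<chi> + dform Bf H \<psi> \<chi>"
  using subspace_representable by (simp add: dform_eq_apply subspace_add)

lemma dform_scaleR_left:
  "\<phi> \<in> representable \<Longrightarrow> \<chi> \<in> representable \<Longrightarrow> dform Bf H (r *\<^sub>R \<phi>) \<chi> = r *\<^sub>R dform Bf H \<phi> \<chi>"
  using subspace_representable by (simp add: dform_eq_apply subspace_scale)

lemma Hdual_eq_0_if_vanishes:
  assumes C: "V.span C = H" and \<phi>: "\<phi> \<in> Hdual smul H" and vanish: "\<And>b. b \<in> C \<Longrightarrow> \<phi> b = 0"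
  shows "\<phi> = 0"
proof
  fix x
  have "x \<in> H \<and> \<phi> x = 0" if "x \<in> V.span C" using that
  proof (induction rule: V.span_induct_alt)
    case base
    then show ?case using H_zero Hdual_linear[OF \<phi> H_zero H_zero, of 1] by simp
  next
    case (step c b y)
    have "b \<in> H" using step(1) C V.span_base by blast
    then show ?case using step vanish[OF step(1)] Hdual_linear[OF \<phi> \<open>b \<in> H\<close>, of y c] H_add H_smul
      by simp
  qed
  then show "\<phi> x = 0 x" using Hdual_outside[OF \<phi>, of x] C by (cases "x \<in> H") auto
qed

text \<open>Restriction to a finite spanning set of H embeds H^* into a finite dimensional space
  of functions.\<close>

lemma finite_independent_Hdual:
  assumes A: "A \<subseteq> Hdual smul H" "independent A"
  shows "finite A"
proof -
  obtain C where C: "finite C" "C \<subseteq> H" "V.span C = H" using finite_basis_H by blast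
  define \<rho> :: "('g \<Rightarrow> complex) \<Rightarrow> 'g \<Rightarrow> complex" where "\<rho> \<phi> x = (if x \<in> C then \<phi> x else 0)" for \<phi> x
  have lin: "linear \<rho>" by (rule linearI) (auto simp: \<rho>_def fun_eq_iff)
  have "span A \<subseteq> Hdual smul H" using A(1) subspace_Hdual by (rule span_minimal)
  have "inj_on \<rho> (span A)"
  proof (rule inj_onI)
    fix \<phi> \<psi> assume "\<phi> \<in> span A" "\<psi> \<in> span A" "\<rho> \<phi> = \<rho> \<psi>"
    then have "\<phi> - \<psi> \<in> Hdual smul H"
      using \<open>span A \<subseteq> Hdual smul H\<close> subspace_diff[OF subspace_Hdual] by blast
    moreover have "(\<phi> - \<psi>) b = 0" if "b \<in> C" for b
    proof -
      have "\<rho> \<phi> b = \<rho> \<psi> b" using \<open>\<rho> \<phi> = \<rho> \<psi>\<close> by simp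
      then show ?thesis using that by (simp add: \<rho>_def)
    qed
    ultimately have "\<phi> - \<psi> = 0" by (rule Hdual_eq_0_if_vanishes[OF C(3)])
    then show "\<phi> = \<psi>" by simp
  qed
  then have indep: "independent (\<rho> ` A)"
    using real_vector.linear_independent_injective_image[OF lin A(2)] by blast
  obtain T where "finite T" "{f :: 'g \<Rightarrow> complex. \<forall>x. x \<notin> C \<longrightarrow> f x = 0} \<subseteq> span T"
    using finite_support_span[OF C(1)] by blast
  moreover have "\<rho> ` A \<subseteq> {f. \<forall>x. x \<notin> C \<longrightarrow> f x = 0}" by (auto simp: \<rho>_def)
  ultimately have "finite (\<rho> ` A)" using independent_span_bound[OF _ indep, of T] by auto
  moreover have "inj_on \<rho> A" using \<open>inj_on \<rho> (span A)\<close> span_superset inj_on_subset by blast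
  ultimately show ?thesis using finite_imageD by blast
qed

lemma finite_spanning_subset_Hdual:
  assumes "S \<subseteq> Hdual smul H" shows "\<exists>A. finite A \<and> A \<subseteq> S \<and> S \<subseteq> span A"
proof -
  obtain A where A: "A \<subseteq> S" "independent A" "S \<subseteq> span A" by (rule maximal_independent_subset)
  moreover have "finite A" using A(1,2) assms by (intro finite_independent_Hdual) auto
  ultimately show ?thesis by auto
qed

lemma radicalI:
  assumes v: "v \<in> span (roots smul br H)"
    and orth: "\<And>\<gamma>. \<gamma> \<in> roots smul br H \<Longrightarrow> dform Bf H \<gamma> v = 0"
  shows "v \<in> radical smul br Bf H"
proof -
  have "w (tvec Bf H v) = 0" if "w \<in> span (roots smul br H)" for w
    using that
  proof (induction rule: span_induct_alt)
    case (step r \<gamma> u)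
    then show ?case
      using orth[OF step(1)] dform_eq_apply[OF root_representable[OF step(1)]] v
        span_roots_representable by auto
  qed simp
  moreover have "dform Bf H v w = w (tvec Bf H v)" if "w \<in> span (roots smul br H)" for w
    using dform_eq_apply[of w v] dform_sym[of v w] span_roots_representable that v by auto
  ultimately show ?thesis using v by (auto simp: radical_def rspan_eq_span)
qed

subsection \<open>The component of a nonisotropic root\<close>

context
  fixes \<alpha>0 :: "'g \<Rightarrow> complex"
  assumes \<alpha>0: "\<alpha>0 \<in> roots_x smul br Bf H"
begin

lemma component_in_roots_x: "\<alpha> \<in> component smul br Bf H \<alpha>0 \<Longrightarrow> \<alpha> \<in> roots_x smul br Bf H"
  using component_subset_roots_x[OF \<alpha>0] by blast

lemma component_in_roots: "\<alpha> \<in> component smul br Bf H \<alpha>0 \<Longrightarrow> \<alpha> \<in> roots smul br H"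
  using component_in_roots_x by (auto simp: roots_x_def)

lemma uminus_in_component:
  assumes \<alpha>: "\<alpha> \<in> component smul br Bf H \<alpha>0" shows "- \<alpha> \<in> component smul br Bf H \<alpha>0"
proof -
  have "dform Bf H \<alpha> (- \<alpha>) = - dform Bf H \<alpha> \<alpha>"
    using tvec_uminus root_representable component_in_roots[OF \<alpha>]
    by (simp add: dform_def Bf_uminus_right)
  then show ?thesis
    using component_closed[OF \<alpha>0 \<alpha> uminus_roots_x[OF component_in_roots_x[OF \<alpha>]]]
      component_in_roots_x[OF \<alpha>]
    by (simp add: roots_x_def)
qed

context
  fixes c :: complex
  assumes real: "\<And>\<alpha> \<beta>. \<alpha> \<in> component smul br Bf H \<alpha>0 \<Longrightarrow> \<beta> \<in> component smul br Bf H \<alpha>0 \<Longrightarrow>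
      c * dform Bf H \<alpha> \<beta> \<in> \<real>"
begin

lemma c_dform_component_real:
  assumes \<gamma>: "\<gamma> \<in> roots smul br H" and \<beta>: "\<beta> \<in> component smul br Bf H \<alpha>0"
  shows "c * dform Bf H \<gamma> \<beta> \<in> \<real>"
proof -
  obtain n :: int where "2 * dform Bf H \<gamma> \<beta> = of_int n * dform Bf H \<beta> \<beta>"
    using root_string[OF component_in_roots_x[OF \<beta>] \<gamma>] by blast
  then have eq: "c * dform Bf H \<gamma> \<beta> = of_int n / 2 * (c * dform Bf H \<beta> \<beta>)"
    by (simp add: field_simps)
  have "(of_int n / 2 :: complex) \<in> \<real>" by simp
  then have "of_int n / 2 * (c * dform Bf H \<beta> \<beta>) \<in> \<real>" using real[OF \<beta> \<beta>] by (rule Reals_mult)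
  then show ?thesis by (simp only: eq)
qed

lemma c_dform_span_component_real:
  assumes \<gamma>: "\<gamma> \<in> roots smul br H" and v: "v \<in> span (component smul br Bf H \<alpha>0)"
  shows "c * dform Bf H \<gamma> v \<in> \<real>"
proof -
  have "c * v (tvec Bf H \<gamma>) \<in> \<real>" using v
  proof (induction rule: span_induct_alt)
    case (step r \<beta> u)
    have "c * \<beta> (tvec Bf H \<gamma>) \<in> \<real>"
      using c_dform_component_real[OF \<gamma> step(1)] dform_sym
        dform_eq_apply[OF root_representable[OF component_in_roots[OF step(1)]] root_representable[OF \<gamma>]]
      by metis
    then have "of_real r * (c * \<beta> (tvec Bf H \<gamma>)) + c * u (tvec Bf H \<gamma>) \<in> \<real>"
      using step(2) by (rule Reals_add[OF Reals_mult[OF Reals_of_real]])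
    then show ?case by (simp add: scaleR_conv_of_real algebra_simps)
  qed simp
  moreover have "v \<in> representable"
    using v span_roots_representable span_mono[of _ "roots smul br H"] component_in_roots by blast
  ultimately show ?thesis
    using dform_eq_apply[OF _ root_representable[OF \<gamma>]] dform_sym by metis
qed

lemma component_connected:
  assumes c: "c \<noteq> 0" and \<beta>: "\<beta> \<in> component smul br Bf H \<alpha>0"
  shows "(\<lambda>\<alpha> \<gamma>. \<alpha> \<in> component smul br Bf H \<alpha>0 \<and> \<gamma> \<in> component smul br Bf H \<alpha>0 \<and>
      Re (c * dform Bf H \<alpha> \<gamma>) \<noteq> 0)\<^sup>*\<^sup>* \<alpha>0 \<beta>"
proof -
  have "(\<lambda>\<alpha> \<gamma>. \<alpha> \<in> roots_x smul br Bf H \<and> \<gamma> \<in> roots_x smul br Bf H \<and> dform Bf H \<alpha> \<gamma> \<noteq> 0)\<^sup>*\<^sup>* \<alpha>0 \<beta>"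
    using \<beta> by (simp add: component_def)
  then show ?thesis
  proof (induction rule: rtranclp_induct)
    case (step \<beta> \<gamma>)
    then have \<beta>\<gamma>: "\<beta> \<in> component smul br Bf H \<alpha>0" "\<gamma> \<in> component smul br Bf H \<alpha>0"
      using self_in_component component_closed[OF \<alpha>0] rtranclp.rtrancl_into_rtrancl
      by (auto simp: component_def)
    then have "Re (c * dform Bf H \<beta> \<gamma>) \<noteq> 0"
      using Re_eq_0_iff_Reals[OF real[OF \<beta>\<gamma>]] c step(2) by simp
    with step.IH \<beta>\<gamma> show ?case by (auto intro: rtranclp.rtrancl_into_rtrancl)
  qed simp
qed

lemma component_root_component:
  assumes c: "c \<noteq> 0" and pos: "\<And>\<alpha>. \<alpha> \<in> component smul br Bf H \<alpha>0 \<Longrightarrow> 0 < Re (c * dform Bf H \<alpha> \<alpha>)"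
  shows "root_component (\<lambda>\<phi> \<psi>. Re (c * dform Bf H \<phi> \<psi>)) (roots smul br H)
    (component smul br Bf H \<alpha>0) \<alpha>0"
proof
  let ?S = "component smul br Bf H \<alpha>0" and ?R = "roots smul br H"
  have span_R: "x \<in> representable" if "x \<in> span ?R" for x
    using that span_roots_representable by blast
  show "?S \<subseteq> ?R" using component_in_roots by blast
  show "Re (c * dform Bf H (x + y) z) = Re (c * dform Bf H x z) + Re (c * dform Bf H y z)"
    if "x \<in> span ?R" "y \<in> span ?R" "z \<in> span ?R" for x y z
    using that by (simp add: span_R dform_add_left distrib_left)
  show "Re (c * dform Bf H (r *\<^sub>R x) z) = r * Re (c * dform Bf H x z)"
    if "x \<in> span ?R" "z \<in> span ?R" for x z and r :: real
    using that by (simp add: span_R dform_scaleR_left scaleR_conv_of_real mult.left_commute[of c])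
  show "Re (c * dform Bf H x y) = Re (c * dform Bf H y x)" for x y by (simp add: dform_sym)
  show "0 < Re (c * dform Bf H \<alpha> \<alpha>)" if "\<alpha> \<in> ?S" for \<alpha> using pos that .
  show "- \<alpha> \<in> ?S" if "\<alpha> \<in> ?S" for \<alpha> using uminus_in_component that .
  show "\<gamma> \<in> ?S" if \<alpha>: "\<alpha> \<in> ?S" and \<gamma>: "\<gamma> \<in> ?R"
    and "Re (c * dform Bf H \<alpha> \<gamma>) \<noteq> 0" "Re (c * dform Bf H \<gamma> \<gamma>) \<noteq> 0" for \<alpha> \<gamma>
  proof -
    have "dform Bf H \<alpha> \<gamma> \<noteq> 0" "dform Bf H \<gamma> \<gamma> \<noteq> 0" using that(3,4) by auto
    then show ?thesis using component_closed[OF \<alpha>0 \<alpha>] \<gamma> by (simp add: roots_x_def)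
  qed
  show "\<exists>n::int. 2 * Re (c * dform Bf H \<gamma> \<alpha>) = of_int n * Re (c * dform Bf H \<alpha> \<alpha>) \<and>
      (\<forall>k\<in>{min 0 n..max 0 n}. \<gamma> - of_int k *\<^sub>R \<alpha> \<in> ?R)" if \<alpha>: "\<alpha> \<in> ?S" and \<gamma>: "\<gamma> \<in> ?R" for \<alpha> \<gamma>
  proof -
    obtain n :: int where n: "2 * dform Bf H \<gamma> \<alpha> = of_int n * dform Bf H \<alpha> \<alpha>"
      and string: "\<And>k. k \<in> {min 0 n..max 0 n} \<Longrightarrow> \<gamma> - of_int k *\<^sub>R \<alpha> \<in> ?R"
      using root_string[OF component_in_roots_x[OF \<alpha>] \<gamma>] by blast
    have "2 * Re (c * dform Bf H \<gamma> \<alpha>) = of_int n * Re (c * dform Bf H \<alpha> \<alpha>)"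
      using arg_cong[OF n, of "\<lambda>z. Re (c * z)"] by (simp add: mult.left_commute[of c])
    then show ?thesis using string by blast
  qed
  show "\<exists>A. finite A \<and> A \<subseteq> ?S \<and> ?S \<subseteq> span A"
    using component_in_roots roots_in_Hdual by (intro finite_spanning_subset_Hdual) blast
  show "\<alpha>0 \<in> ?S" by (rule self_in_component)
  show "(\<lambda>\<alpha> \<gamma>. \<alpha> \<in> ?S \<and> \<gamma> \<in> ?S \<and> Re (c * dform Bf H \<alpha> \<gamma>) \<noteq> 0)\<^sup>*\<^sup>* \<alpha>0 \<beta>" if "\<beta> \<in> ?S" for \<beta>
    using component_connected[OF c that] .
qed

end

end

end

theorem lemma1p9:
  fixes smul :: "complex \<Rightarrow> 'g::ab_group_add \<Rightarrow> 'g"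
    and br :: "'g \<Rightarrow> 'g \<Rightarrow> 'g"
    and Bf :: "'g \<Rightarrow> 'g \<Rightarrow> complex"
    and H :: "'g set"
    and \<alpha>0 :: "'g \<Rightarrow> complex"
    and c :: complex
  assumes "gen_reductive smul br Bf H"
    and "\<alpha>0 \<in> roots_x smul br Bf H"
    and "c \<noteq> 0"
    and "\<forall>u\<in>rspan (component smul br Bf H \<alpha>0). \<forall>w\<in>rspan (component smul br Bf H \<alpha>0).
           c * dform Bf H u w \<in> \<real>"
    and "\<forall>\<alpha>\<in>component smul br Bf H \<alpha>0. Re (c * dform Bf H \<alpha> \<alpha>) > 0"
  shows "(\<forall>v\<in>rspan (component smul br Bf H \<alpha>0).
            v \<notin> radical smul br Bf H \<longrightarrow> Re (c * dform Bf H v v) > 0)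
       \<and> (\<forall>v\<in>rspan (component smul br Bf H \<alpha>0). Re (c * dform Bf H v v) \<ge> 0)"
proof -
  interpret gen_reductive_algebra smul br Bf H by standard (rule assms(1))
  let ?S = "component smul br Bf H \<alpha>0"
  have real: "c * dform Bf H \<alpha> \<beta> \<in> \<real>" if "\<alpha> \<in> ?S" "\<beta> \<in> ?S" for \<alpha> \<beta>
    using assms(4) span_base[OF that(1)] span_base[OF that(2)] by (simp add: rspan_eq_span)
  interpret root_component "\<lambda>\<phi> \<psi>. Re (c * dform Bf H \<phi> \<psi>)" "roots smul br H" ?S \<alpha>0
    using component_root_component[OF assms(2) real assms(3)] assms(5) by blast
  have nonneg: "0 \<le> Re (c * dform Bf H v v)" if "v \<in> span ?S" for v
    using B_nonneg[OF that] .
  have "v \<in> radical smul br Bf H" if v: "v \<in> span ?S" and "Re (c * dform Bf H v v) = 0" for v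
  proof (rule radicalI)
    show "v \<in> span (roots smul br H)" using v span_S_subset by blast
    fix \<gamma> assume \<gamma>: "\<gamma> \<in> roots smul br H"
    then have "Re (c * dform Bf H \<gamma> v) = 0" using B_isotropic_orthogonal[OF v] that(2) by blast
    then show "dform Bf H \<gamma> v = 0"
      using Re_eq_0_iff_Reals[OF c_dform_span_component_real[OF assms(2) real \<gamma> v]] assms(3) by simp
  qed
  then show ?thesis using nonneg by (force simp: rspan_eq_span)
qed

end
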